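(* Let $\mathcal D\subseteq(0,1)$ be nonempty and $f:\mathcal D\to(0,1)$. The following are equivalent: (I) $f$ has a block simulation; (II) $f$ can be simulated by a finite automaton; (III) $f$ is the restriction to $\mathcal D$ of a rational function $F\in\mathbb Q(x)$ that is defined and satisfies $0<F(x)<1$ for all $x\in(0,1)$.
   Context: For $w\in\{0,1\}^*$ let $n_i(w)$ be the number of $i$'s in $w$; $\mathbf P_p[w]=p^{n_1(w)}(1-p)^{n_0(w)}$ and $\mathbf P_p[L]=\sum_{w\in L}\mathbf P_p[w]$. A simulation of $f:\mathcal D\to[0,1]$ is a pair of disjoint languages $L_0,L_1\subseteq\{0,1\}^*$ with $L_0\cup L_1$ prefix-free such that $\mathbf P_p[L_0\cup L_1]=1$ and $\mathbf P_p[L_1]=f(p)$ for all $p\in\mathcal D$. A finite automaton consists of finite state set $S$, start state $s_0$, transition function $\delta:S\times\{0,1\}\to S$ (extended to strings), and disjoint absorbing final-state sets $S_0,S_1$; $L_i$ is the set of strings $w$ with $\delta(s_0,w)\in S_i$ and $\delta(s_0,w')\notin S_0\cup S_1$ for every proper prefix $w'$ of $w$; the automaton simulates $f$ if $(L_0,L_1)$ is a simulation of $f$. A block simulation of $f$ is a simulation of the following form: for some $k\ge1$ and disjoint sets $A_0,A_1\subseteq\{0,1\}^k$, with $A'=\{0,1\}^k\setminus(A_0\cup A_1)$, one has $L_i=(A')^*A_i$, i.e. $L_i$ is the set of concatenations $u_1u_2\cdots u_mv$ with $m\ge0$, $u_j\in A'$, $v\in A_i$ (read $k$-bit blocks, output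 $i$ on a block in $A_i$, discard blocks in $A'$). *)

theory Defs
  imports "HOL-Analysis.Analysis" "HOL-Computational_Algebra.Polynomial"
begin

text \<open>Binary words are bool lists; True stands for the bit 1, False for the bit 0.\<close>

definition Pw :: "real \<Rightarrow> bool list \<Rightarrow> real" where
  "Pw p w = p ^ length (filter (\<lambda>b. b) w) * (1 - p) ^ length (filter (\<lambda>b. \<not> b) w)"

definition prefix_free :: "bool list set \<Rightarrow> bool" where
  "prefix_free L \<longleftrightarrow> (\<forall>u\<in>L. \<forall>v\<in>L. \<forall>z. v = u @ z \<longrightarrow> z = [])"

text \<open>P_p[L] = s is expressed as convergence of the (nonnegative) sum to s.\<close>
definition is_simulation ::
  "real set \<Rightarrow> (real \<Rightarrow> real) \<Rightarrow> bool list set \<Rightarrow> bool list set \<Rightarrow> bool" where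
  "is_simulation D f L0 L1 \<longleftrightarrow>
     L0 \<inter> L1 = {} \<and> prefix_free (L0 \<union> L1) \<and>
     (\<forall>p\<in>D. (Pw p has_sum 1) (L0 \<union> L1) \<and> (Pw p has_sum f p) L1)"

definition block_lang :: "bool list set \<Rightarrow> bool list set \<Rightarrow> bool list set" where
  "block_lang A' A = {concat us @ v | us v. set us \<subseteq> A' \<and> v \<in> A}"

definition has_block_simulation :: "real set \<Rightarrow> (real \<Rightarrow> real) \<Rightarrow> bool" where
  "has_block_simulation D f \<longleftrightarrow>
     (\<exists>k::nat. \<exists>A0 A1. k \<ge> 1 \<and> A0 \<subseteq> {w. length w = k} \<and> A1 \<subseteq> {w. length w = k}
        \<and> A0 \<inter> A1 = {} \<and>
        (let A' = {w. length w = k} - (A0 \<union> A1) in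
           is_simulation D f (block_lang A' A0) (block_lang A' A1)))"

definition dstar :: "(nat \<Rightarrow> bool \<Rightarrow> nat) \<Rightarrow> nat \<Rightarrow> bool list \<Rightarrow> nat" where
  "dstar \<delta> s w = foldl \<delta> s w"

definition aut_lang ::
  "(nat \<Rightarrow> bool \<Rightarrow> nat) \<Rightarrow> nat \<Rightarrow> nat set \<Rightarrow> nat set \<Rightarrow> nat set \<Rightarrow> bool list set" where
  "aut_lang \<delta> s0 S0 S1 Si = {w. dstar \<delta> s0 w \<in> Si \<and>
      (\<forall>w' z. w = w' @ z \<and> z \<noteq> [] \<longrightarrow> dstar \<delta> s0 w' \<notin> S0 \<union> S1)}"

definition is_automaton ::
  "nat set \<Rightarrow> nat \<Rightarrow> (nat \<Rightarrow> bool \<Rightarrow> nat) \<Rightarrow> nat set \<Rightarrow> nat set \<Rightarrow> bool" where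
  "is_automaton S s0 \<delta> S0 S1 \<longleftrightarrow> finite S \<and> s0 \<in> S \<and>
     (\<forall>s\<in>S. \<forall>b. \<delta> s b \<in> S) \<and> S0 \<subseteq> S \<and> S1 \<subseteq> S \<and> S0 \<inter> S1 = {} \<and>
     (\<forall>s\<in>S0. \<forall>b. \<delta> s b = s) \<and> (\<forall>s\<in>S1. \<forall>b. \<delta> s b = s)"

definition automaton_simulable :: "real set \<Rightarrow> (real \<Rightarrow> real) \<Rightarrow> bool" where
  "automaton_simulable D f \<longleftrightarrow>
     (\<exists>S s0 \<delta> S0 S1. is_automaton S s0 \<delta> S0 S1 \<and>
        is_simulation D f (aut_lang \<delta> s0 S0 S1 S0) (aut_lang \<delta> s0 S0 S1 S1))"

definition rational_simulable :: "real set \<Rightarrow> (real \<Rightarrow> real) \<Rightarrow> bool" where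
  "rational_simulable D f \<longleftrightarrow>
     (\<exists>P Q :: rat poly.
        (\<forall>x::real. 0 < x \<and> x < 1 \<longrightarrow>
           poly (map_poly of_rat Q) x \<noteq> 0 \<and>
           0 < poly (map_poly of_rat P) x / poly (map_poly of_rat Q) x \<and>
           poly (map_poly of_rat P) x / poly (map_poly of_rat Q) x < 1) \<and>
        (\<forall>p\<in>D. f p = poly (map_poly of_rat P) p / poly (map_poly of_rat Q) p))"

end

(*
  (I) implies (II): an automaton runs a block simulation by buffering the current incomplete
  block in its state.

  (II) implies (III): the acceptance probabilities x of the live states satisfy x = M(p) x + b(p),
  where M(p) is substochastic and, because the automaton halts almost surely, every state leads
  to a row of M(p) with sum < 1.  A maximum principle makes I - M(p) invertible, and Cramer's rule
  writes the acceptance probability of the start state as a quotient of determinants of matrices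
  over Q[p].

  (III) implies (I): write F = P/Q with 0 < P < Q on (0,1).  By Polya's theorem, P and Q - P have
  nonnegative rational coefficients in the basis p^i (1-p)^(n-i) for large n.  After clearing
  denominators and multiplying P and Q by p^j (1-p)^j for large j, these coefficients become
  natural numbers below the binomial coefficients of the new degree k, so they count words of
  length k with i ones; these words form the sets A1 and A0 of a block simulation with
  P_p[A1] / P_p[A0 \<union> A1] = F(p).
*)

theory Submission
  imports Defs "Jordan_Normal_Form.Char_Poly" "HOL-Library.Countable"
begin

section \<open>Word probabilities and Kraft's inequality\<close>

lemma Pw_Nil [simp]: "Pw p [] = 1"
  by (simp add: Pw_def)

lemma Pw_Cons [simp]: "Pw p (b # w) = (if b then p else 1 - p) * Pw p w"
  by (simp add: Pw_def)

lemma Pw_append [simp]: "Pw p (u @ v) = Pw p u * Pw p v"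
  by (induct u) auto

lemma Pw_nonneg: "0 \<le> p \<Longrightarrow> p \<le> 1 \<Longrightarrow> 0 \<le> Pw p w"
  by (simp add: Pw_def)

lemma Pw_pos: "0 < p \<Longrightarrow> p < 1 \<Longrightarrow> 0 < Pw p w"
  by (simp add: Pw_def)

lemma finite_bool_lists_length: "finite {w :: bool list. length w = k}"
  using finite_lists_length_eq[of "UNIV :: bool set" k] by simp

lemma finite_Cons_tails: "finite F \<Longrightarrow> finite {w. b # w \<in> F}"
  using finite_vimageI[of F "Cons b"] by (simp add: vimage_def)

lemma bool_lists_split_head:
  assumes "[] \<notin> F"
  shows "F = Cons True ` {w. True # w \<in> F} \<union> Cons False ` {w. False # w \<in> F}"
proof -
  have "w \<in> Cons True ` {w. True # w \<in> F} \<union> Cons False ` {w. False # w \<in> F}" if w: "w \<in> F" for w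
  proof -
    obtain b v where "w = b # v"
      using w assms by (cases w) auto
    with w show ?thesis
      by (cases b) auto
  qed
  then show ?thesis
    by auto
qed

lemma sum_Pw_split_head:
  assumes "finite F" "[] \<notin> F"
  shows "sum (Pw p) F = p * sum (Pw p) {w. True # w \<in> F} + (1 - p) * sum (Pw p) {w. False # w \<in> F}"
  using assms(1)
  by (subst bool_lists_split_head[OF assms(2)], subst sum.union_disjoint)
    (auto simp: finite_Cons_tails sum.reindex sum_distrib_left)

lemma sum_Pw_words: "(\<Sum>w | length w = k. Pw p w) = 1"
proof (induction k)
  case 0
  have "{w :: bool list. length w = 0} = {[]}"
    by auto
  then show ?case
    by simp
next
  case (Suc k)
  then show ?case
    by (subst sum_Pw_split_head) (simp_all add: finite_bool_lists_length)
qed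

lemma prefix_free_tails: "prefix_free F \<Longrightarrow> prefix_free {w. b # w \<in> F}"
  unfolding prefix_free_def by (metis append_Cons mem_Collect_eq)

lemma kraft_inequality:
  assumes "0 \<le> p" "p \<le> 1" "finite F" "prefix_free F"
  shows "sum (Pw p) F \<le> 1"
proof -
  have "sum (Pw p) F \<le> 1" if "\<forall>w\<in>F. length w \<le> n" "finite F" "prefix_free F" for n F
    using that
  proof (induction n arbitrary: F)
    case 0
    then have "F \<subseteq> {[]}"
      by auto
    then show ?case
      by (auto simp: subset_singleton_iff)
  next
    case (Suc n)
    show ?case
    proof (cases "[] \<in> F")
      case True
      with Suc.prems(3) have "F = {[]}"
        unfolding prefix_free_def by (metis append_Nil empty_iff insertI1 subsetI subset_singletonD)
      then show ?thesis
        by simp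
    next
      case False
      have tails: "sum (Pw p) {w. b # w \<in> F} \<le> 1" for b
        by (rule Suc.IH) (use Suc.prems in \<open>auto simp: finite_Cons_tails prefix_free_tails\<close>)
      have "sum (Pw p) F = p * sum (Pw p) {w. True # w \<in> F} + (1 - p) * sum (Pw p) {w. False # w \<in> F}"
        using Suc.prems(2) False by (rule sum_Pw_split_head)
      also have "\<dots> \<le> p * 1 + (1 - p) * 1"
        by (intro add_mono mult_left_mono tails) (use assms in auto)
      finally show ?thesis
        by simp
    qed
  qed
  from this[where n = "Max (length ` F)"] show ?thesis
    using assms by auto
qed

lemma has_sum_Pw_prefix_free:
  assumes "0 \<le> p" "p \<le> 1" "prefix_free L"
  obtains s where "(Pw p has_sum s) L" "0 \<le> s" "s \<le> 1"
proof -
  have finite_sums: "sum (Pw p) F \<le> 1" if "finite F" "F \<subseteq> L" for F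
    using kraft_inequality[OF assms(1,2) that(1)] prefix_free_def assms(3) that(2)
    by (metis (no_types, lifting) subsetD)
  let ?s = "SUP F\<in>{F. finite F \<and> F \<subseteq> L}. sum (Pw p) F"
  have "bdd_above (sum (Pw p) ` {F. F \<subseteq> L \<and> finite F})"
    using finite_sums by (intro bdd_aboveI[of _ 1]) blast
  then have "(Pw p has_sum ?s) L"
    by (rule nonneg_bdd_above_has_sum[rotated]) (use Pw_nonneg assms in auto)
  moreover from this have "0 \<le> ?s" "?s \<le> 1"
    by (auto intro: has_sum_nonneg has_sum_le_finite_sums Pw_nonneg assms finite_sums)
  ultimately show ?thesis
    using that by blast
qed

lemma has_sum_Pw_append_image:
  assumes "(Pw p has_sum s) L"
  shows "(Pw p has_sum (Pw p u * s)) ((@) u ` L)"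
proof -
  have "inj_on ((@) u) L" and "Pw p \<circ> (@) u = (\<lambda>w. Pw p u * Pw p w)"
    by (auto simp: inj_on_def fun_eq_iff)
  then show ?thesis
    using has_sum_reindex has_sum_cmult_right[OF assms] by metis
qed

lemma has_sum_Pw_Cons_image:
  assumes "(Pw p has_sum s) L"
  shows "(Pw p has_sum ((if b then p else 1 - p) * s)) (Cons b ` L)"
  using has_sum_Pw_append_image[OF assms, of "[b]"] by (simp add: image_def)

section \<open>Block simulations\<close>

lemma block_lang_Un: "block_lang A' A0 \<union> block_lang A' A1 = block_lang A' (A0 \<union> A1)"
  unfolding block_lang_def by blast

locale blocks =
  fixes k :: nat and A' :: "bool list set"
  assumes k_pos: "k \<ge> 1" and discarded_length: "A' \<subseteq> {w. length w = k}"
begin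

lemma block_factorization_unique:
  assumes "set us \<subseteq> A'" "set us' \<subseteq> A'" "length v = k" "v \<notin> A'"
    and "length r \<le> k" "length r = k \<Longrightarrow> r \<notin> A'"
    and "concat us @ v @ z = concat us' @ r"
  shows "us = us' \<and> v = r \<and> z = []"
  using assms
proof (induction us arbitrary: us')
  case Nil
  show ?case
  proof (cases us')
    case Nil
    with Nil.prems show ?thesis
      by (auto simp: append_eq_append_conv2 append_eq_conv_conj)
  next
    case (Cons u' us'')
    with Nil.prems discarded_length have "u' \<in> A'" "length u' = k"
      by auto
    with Nil.prems Cons show ?thesis
      by (auto simp: append_eq_append_conv)
  qed
next
  case (Cons u us)
  with discarded_length have u: "u \<in> A'" "length u = k"
    by auto
  show ?case
  proof (cases us')
    case Nil
    have "2 * k \<le> length (concat (u # us) @ v @ z)"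
      using u Cons.prems(3) by simp
    also have "\<dots> = length r"
      using Cons.prems(7) Nil by simp
    finally have False
      using Cons.prems(5) k_pos by linarith
    then show ?thesis ..
  next
    case (Cons u' us'')
    with Cons.prems discarded_length have "length u' = k"
      by auto
    with u Cons.prems(7) \<open>us' = u' # us''\<close> have "u = u'" "concat us @ v @ z = concat us'' @ r"
      by (auto simp: append_eq_append_conv)
    with Cons.IH[of us''] Cons.prems \<open>us' = u' # us''\<close> show ?thesis
      by auto
  qed
qed


lemma block_lang_length: "A \<subseteq> {w. length w = k} \<Longrightarrow> x \<in> block_lang A' A \<Longrightarrow> length x \<ge> k"
  unfolding block_lang_def by auto

lemma block_lang_prefix_free:
  assumes "A \<subseteq> {w. length w = k}" "A \<inter> A' = {}"
  shows "prefix_free (block_lang A' A)"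
  unfolding prefix_free_def
proof (intro ballI allI impI)
  fix x y z
  assume "x \<in> block_lang A' A" "y \<in> block_lang A' A" "y = x @ z"
  then obtain us v us' v' where "concat us @ v @ z = concat us' @ v'"
    "set us \<subseteq> A'" "v \<in> A" "set us' \<subseteq> A'" "v' \<in> A"
    unfolding block_lang_def by auto
  with assms show "z = []"
    using block_factorization_unique[of us us' v v' z] by auto
qed

lemma block_lang_disjoint:
  assumes "A0 \<subseteq> {w. length w = k}" "A1 \<subseteq> {w. length w = k}"
    and "A0 \<inter> A' = {}" "A1 \<inter> A' = {}" "A0 \<inter> A1 = {}"
  shows "block_lang A' A0 \<inter> block_lang A' A1 = {}"
proof (rule ccontr)
  assume "block_lang A' A0 \<inter> block_lang A' A1 \<noteq> {}"
  then obtain us v us' v' where "concat us @ v @ [] = concat us' @ v'"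
    "set us \<subseteq> A'" "v \<in> A0" "set us' \<subseteq> A'" "v' \<in> A1"
    unfolding block_lang_def by auto
  moreover have "length v = k" "length v' = k" "v \<notin> A'" "v' \<notin> A'"
    using assms calculation by auto
  ultimately have "v = v'"
    using block_factorization_unique[of us us' v v' "[]"] by auto
  with assms \<open>v \<in> A0\<close> \<open>v' \<in> A1\<close> show False
    by auto
qed

lemma block_lang_unfold: "block_lang A' A = A \<union> (\<Union>u\<in>A'. (@) u ` block_lang A' A)"
proof (intro equalityI subsetI)
  fix x
  assume "x \<in> block_lang A' A"
  then obtain us v where x: "x = concat us @ v" "set us \<subseteq> A'" "v \<in> A"
    unfolding block_lang_def by blast
  show "x \<in> A \<union> (\<Union>u\<in>A'. (@) u ` block_lang A' A)"
  proof (cases us)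
    case (Cons u us')
    with x have "concat us' @ v \<in> block_lang A' A"
      unfolding block_lang_def by auto
    with x Cons show ?thesis
      by auto
  qed (use x in simp)
next
  fix x
  assume "x \<in> A \<union> (\<Union>u\<in>A'. (@) u ` block_lang A' A)"
  then show "x \<in> block_lang A' A"
  proof
    assume "x \<in> A"
    then show ?thesis
      unfolding block_lang_def by (intro CollectI exI[of _ "[]"] exI[of _ x]) auto
  next
    assume "x \<in> (\<Union>u\<in>A'. (@) u ` block_lang A' A)"
    then obtain u us v where "u \<in> A'" "x = u @ concat us @ v" "set us \<subseteq> A'" "v \<in> A"
      unfolding block_lang_def by blast
    then show ?thesis
      unfolding block_lang_def by (intro CollectI exI[of _ "u # us"]) auto
  qed
qed

text \<open>Decomposing by the first block gives \<open>s = a + a' s\<close> for the probability \<open>s\<close>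
  of the block language, where \<open>a\<close> and \<open>a'\<close> are the probabilities of \<open>A\<close> and \<open>A'\<close>.\<close>

lemma block_lang_has_sum:
  assumes A: "A \<subseteq> {w. length w = k}" "A \<inter> A' = {}" "A \<noteq> {}" and p: "0 < p" "p < 1"
  shows "(Pw p has_sum (sum (Pw p) A / (1 - sum (Pw p) A'))) (block_lang A' A)"
proof -
  define L where "L = block_lang A' A"
  define a where "a = sum (Pw p) A"
  define a' where "a' = sum (Pw p) A'"
  obtain s where s: "(Pw p has_sum s) L"
    using has_sum_Pw_prefix_free[of p L] block_lang_prefix_free[OF A(1,2)] p
    unfolding L_def by force
  have fin: "finite A" "finite A'"
    using A(1) discarded_length finite_bool_lists_length finite_subset by blast+
  have "(Pw p has_sum (\<Sum>u\<in>A'. Pw p u * s)) (\<Union>u\<in>A'. (@) u ` L)"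
  proof (rule sum_has_sum[OF fin(2)])
    show "(Pw p has_sum (Pw p u * s)) ((@) u ` L)" for u
      using has_sum_Pw_append_image[OF s] .
    show "(@) u ` L \<inter> (@) u' ` L = {}" if "u \<in> A'" "u' \<in> A'" "u \<noteq> u'" for u u'
    proof -
      have "length u = length u'"
        using that discarded_length by auto
      with that show ?thesis
        by (auto simp: append_eq_append_conv)
    qed
  qed
  moreover have "A \<inter> (\<Union>u\<in>A'. (@) u ` L) = {}"
    using A discarded_length block_lang_length[OF A(1)] k_pos unfolding L_def by fastforce
  ultimately have "(Pw p has_sum (a + (\<Sum>u\<in>A'. Pw p u * s))) (A \<union> (\<Union>u\<in>A'. (@) u ` L))"
    unfolding a_def by (rule has_sum_Un_disjoint[OF has_sum_finite[OF fin(1)]])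
  then have "(Pw p has_sum (a + a' * s)) L"
    unfolding L_def a'_def sum_distrib_right by (subst block_lang_unfold) simp
  with s have s_eq: "s = a + a' * s"
    using has_sum_unique by blast
  have "a + a' = sum (Pw p) (A \<union> A')"
    unfolding a_def a'_def using fin A by (simp add: sum.union_disjoint)
  also have "\<dots> \<le> (\<Sum>w | length w = k. Pw p w)"
    using A discarded_length Pw_nonneg p by (intro sum_mono2 finite_bool_lists_length) auto
  finally have "a + a' \<le> 1"
    by (simp add: sum_Pw_words)
  moreover have "a > 0"
    unfolding a_def using A fin Pw_pos p by (intro sum_pos) auto
  ultimately have "s = a / (1 - a')"
    using s_eq by (simp add: field_simps)
  with s show ?thesis
    unfolding L_def a_def a'_def by simp
qed

end

lemma has_block_simulationI:
  assumes k: "k \<ge> 1" and A: "A0 \<subseteq> {w. length w = k}" "A1 \<subseteq> {w. length w = k}" "A0 \<inter> A1 = {}"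
    and nonempty: "A0 \<union> A1 \<noteq> {}" and D: "D \<subseteq> {0<..<1}"
    and f: "\<And>p. p \<in> D \<Longrightarrow> f p = sum (Pw p) A1 / sum (Pw p) (A0 \<union> A1)"
  shows "has_block_simulation D f"
proof -
  define A' where "A' = {w. length w = k} - (A0 \<union> A1)"
  interpret blocks k A'
    using k by unfold_locales (auto simp: A'_def)
  have sim: "is_simulation D f (block_lang A' A0) (block_lang A' A1)"
    unfolding is_simulation_def
  proof (intro conjI ballI)
    show "block_lang A' A0 \<inter> block_lang A' A1 = {}"
      by (rule block_lang_disjoint) (use A in \<open>auto simp: A'_def\<close>)
    show "prefix_free (block_lang A' A0 \<union> block_lang A' A1)"
      unfolding block_lang_Un by (rule block_lang_prefix_free) (use A in \<open>auto simp: A'_def\<close>)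
    fix p
    assume "p \<in> D"
    with D have p: "0 < p" "p < 1"
      by auto
    have "1 = (\<Sum>w | length w = k. Pw p w)"
      by (simp add: sum_Pw_words)
    also have "\<dots> = sum (Pw p) (A0 \<union> A1) + sum (Pw p) A'"
      unfolding A'_def using A by (subst sum.union_disjoint[symmetric])
        (auto intro: finite_subset[OF _ finite_bool_lists_length] simp: Un_absorb1)
    finally have complement: "1 - sum (Pw p) A' = sum (Pw p) (A0 \<union> A1)"
      by simp
    have pos: "sum (Pw p) (A0 \<union> A1) > 0"
      using A nonempty Pw_pos[OF p] by (intro sum_pos finite_subset[OF _ finite_bool_lists_length]) auto
    have "(Pw p has_sum 1) (block_lang A' (A0 \<union> A1))"
      using block_lang_has_sum[of "A0 \<union> A1" p] A nonempty p pos
      unfolding complement by (auto simp: A'_def)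
    then show "(Pw p has_sum 1) (block_lang A' A0 \<union> block_lang A' A1)"
      unfolding block_lang_Un .
    show "(Pw p has_sum f p) (block_lang A' A1)"
    proof (cases "A1 = {}")
      case True
      then show ?thesis
        using f[OF \<open>p \<in> D\<close>] by (simp add: block_lang_def)
    next
      case False
      then show ?thesis
        using block_lang_has_sum[of A1 p] A p unfolding complement f[OF \<open>p \<in> D\<close>]
        by (auto simp: A'_def)
    qed
  qed
  show ?thesis
    unfolding has_block_simulation_def Let_def
    using k A sim by (auto simp: A'_def)
qed

definition words_with_ones :: "nat \<Rightarrow> nat \<Rightarrow> bool list set" where
  "words_with_ones k i = {w. length w = k \<and> length (filter (\<lambda>b. b) w) = i}"

lemma words_with_ones_subset: "words_with_ones k i \<subseteq> {w. length w = k}"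
  by (auto simp: words_with_ones_def)

lemma finite_words_with_ones: "finite (words_with_ones k i)"
  using finite_subset[OF words_with_ones_subset finite_bool_lists_length] .

lemma words_with_ones_disjoint: "i \<noteq> j \<Longrightarrow> words_with_ones k i \<inter> words_with_ones k j = {}"
  by (auto simp: words_with_ones_def)

lemma Pw_words_with_ones: "w \<in> words_with_ones k i \<Longrightarrow> Pw p w = p ^ i * (1 - p) ^ (k - i)"
  using sum_length_filter_compl[of "\<lambda>b. b" w]
  by (auto simp: words_with_ones_def Pw_def)

lemma card_words_with_ones: "k choose i \<le> card (words_with_ones k i)"
proof -
  let ?subsets = "{X. X \<subseteq> {0..<k} \<and> card X = i}"
  define indicator_word where "indicator_word X = map (\<lambda>l. l \<in> X) [0..<k]" for X :: "nat set"
  have "inj_on indicator_word ?subsets"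
  proof (rule inj_onI)
    fix X Y
    assume "X \<in> ?subsets" "Y \<in> ?subsets" "indicator_word X = indicator_word Y"
    then show "X = Y"
      unfolding indicator_word_def by (auto simp: list_eq_iff_nth_eq subset_iff)
  qed
  moreover have "indicator_word ` ?subsets \<subseteq> words_with_ones k i"
  proof
    fix w
    assume "w \<in> indicator_word ` ?subsets"
    then obtain X where X: "X \<subseteq> {0..<k}" "card X = i" "w = indicator_word X"
      by auto
    have "length (filter (\<lambda>b. b) w) = length (filter (\<lambda>l. l \<in> X) [0..<k])"
      unfolding X indicator_word_def by (simp add: filter_map o_def)
    also have "\<dots> = card (set (filter (\<lambda>l. l \<in> X) [0..<k]))"
      by (rule distinct_card[symmetric]) simp
    also have "set (filter (\<lambda>l. l \<in> X) [0..<k]) = X"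
      using X by auto
    finally show "w \<in> words_with_ones k i"
      using X by (simp add: words_with_ones_def indicator_word_def)
  qed
  ultimately have "card ?subsets \<le> card (words_with_ones k i)"
    by (rule card_inj_on_le[OF _ _ finite_words_with_ones])
  then show ?thesis
    using n_subsets[of "{0..<k}" i] by simp
qed

lemma obtain_disjoint_subsets_card:
  assumes "finite T" "a + b \<le> card T"
  obtains X Y where "X \<subseteq> T" "Y \<subseteq> T" "X \<inter> Y = {}" "card X = a" "card Y = b"
proof -
  obtain U where U: "U \<subseteq> T" "card U = a + b" "finite U"
    using obtain_subset_with_card_n[OF assms(2)] by blast
  obtain X where X: "X \<subseteq> U" "card X = a"
    using obtain_subset_with_card_n[of a U] U by auto
  have "card (U - X) = b"
    using X U by (simp add: card_Diff_subset finite_subset)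
  with X U show ?thesis
    using that[of X "U - X"] by blast
qed

lemma sum_Pw_Union_words_with_ones:
  assumes "\<And>i. i \<le> k \<Longrightarrow> Z i \<subseteq> words_with_ones k i"
  shows "sum (Pw p) (\<Union>i\<le>k. Z i) = (\<Sum>i\<le>k. real (card (Z i)) * (p ^ i * (1 - p) ^ (k - i)))"
proof -
  have fin: "finite (Z i)" if "i \<le> k" for i
    using assms[OF that] finite_words_with_ones finite_subset by blast
  have "sum (Pw p) (\<Union>i\<le>k. Z i) = (\<Sum>i\<le>k. sum (Pw p) (Z i))"
  proof (rule sum.UNION_disjoint)
    show "\<forall>i\<in>{..k}. \<forall>j\<in>{..k}. i \<noteq> j \<longrightarrow> Z i \<inter> Z j = {}"
    proof (intro ballI impI)
      fix i j
      assume "i \<in> {..k}" "j \<in> {..k}" "i \<noteq> j"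
      then show "Z i \<inter> Z j = {}"
        using assms[of i] assms[of j] words_with_ones_disjoint[of i j k] by auto
    qed
  qed (use fin in auto)
  also have "\<dots> = (\<Sum>i\<le>k. real (card (Z i)) * (p ^ i * (1 - p) ^ (k - i)))"
  proof (intro sum.cong refl)
    fix i
    assume "i \<in> {..k}"
    then have "Pw p w = p ^ i * (1 - p) ^ (k - i)" if "w \<in> Z i" for w
      using assms[of i] that Pw_words_with_ones by auto
    then show "sum (Pw p) (Z i) = real (card (Z i)) * (p ^ i * (1 - p) ^ (k - i))"
      by simp
  qed
  finally show ?thesis .
qed

lemma obtain_block_sets:
  assumes "\<And>i. i \<le> k \<Longrightarrow> \<alpha> i + \<beta> i \<le> k choose i"
  obtains A0 A1 where "A0 \<subseteq> {w. length w = k}" "A1 \<subseteq> {w. length w = k}" "A0 \<inter> A1 = {}"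
    "\<And>p. sum (Pw p) A1 = (\<Sum>i\<le>k. real (\<alpha> i) * (p ^ i * (1 - p) ^ (k - i)))"
    "\<And>p. sum (Pw p) A0 = (\<Sum>i\<le>k. real (\<beta> i) * (p ^ i * (1 - p) ^ (k - i)))"
proof -
  have "\<exists>X Y. X \<subseteq> words_with_ones k i \<and> Y \<subseteq> words_with_ones k i \<and> X \<inter> Y = {} \<and>
      card X = \<alpha> i \<and> card Y = \<beta> i" if "i \<le> k" for i
  proof -
    have "\<alpha> i + \<beta> i \<le> card (words_with_ones k i)"
      using assms[OF that] card_words_with_ones[of k i] by linarith
    then obtain X Y where "X \<subseteq> words_with_ones k i" "Y \<subseteq> words_with_ones k i" "X \<inter> Y = {}"
      "card X = \<alpha> i" "card Y = \<beta> i"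
      by (rule obtain_disjoint_subsets_card[OF finite_words_with_ones])
    then show ?thesis
      by blast
  qed
  then obtain X Y where XY: "\<And>i. i \<le> k \<Longrightarrow> X i \<subseteq> words_with_ones k i \<and> Y i \<subseteq> words_with_ones k i \<and>
      X i \<inter> Y i = {} \<and> card (X i) = \<alpha> i \<and> card (Y i) = \<beta> i"
    by metis
  show ?thesis
  proof (rule that[of "\<Union>i\<le>k. Y i" "\<Union>i\<le>k. X i"])
    show "(\<Union>i\<le>k. Y i) \<subseteq> {w. length w = k}" "(\<Union>i\<le>k. X i) \<subseteq> {w. length w = k}"
      using XY words_with_ones_subset by blast+
    show "(\<Union>i\<le>k. Y i) \<inter> (\<Union>i\<le>k. X i) = {}"
    proof (rule ccontr)
      assume "(\<Union>i\<le>k. Y i) \<inter> (\<Union>i\<le>k. X i) \<noteq> {}"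
      then obtain i j w where ij: "i \<le> k" "j \<le> k" and w: "w \<in> Y i" "w \<in> X j"
        by blast
      then have "i = j"
        using XY[OF ij(1)] XY[OF ij(2)] words_with_ones_disjoint[of i j k] by blast
      with XY[OF ij(1)] w show False
        by blast
    qed
  qed (use XY in \<open>simp_all add: sum_Pw_Union_words_with_ones\<close>)
qed

lemma has_block_simulation_bernstein:
  fixes \<alpha> \<beta> :: "nat \<Rightarrow> nat"
  assumes k: "k \<ge> 1" and bound: "\<And>i. i \<le> k \<Longrightarrow> \<alpha> i + \<beta> i \<le> k choose i"
    and nonzero: "\<exists>i\<le>k. \<alpha> i + \<beta> i > 0" and D: "D \<subseteq> {0<..<1}"
    and f: "\<And>p. p \<in> D \<Longrightarrow> f p = (\<Sum>i\<le>k. real (\<alpha> i) * (p ^ i * (1 - p) ^ (k - i))) /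
        (\<Sum>i\<le>k. real (\<alpha> i + \<beta> i) * (p ^ i * (1 - p) ^ (k - i)))"
  shows "has_block_simulation D f"
proof -
  obtain A0 A1 where A: "A0 \<subseteq> {w. length w = k}" "A1 \<subseteq> {w. length w = k}" "A0 \<inter> A1 = {}"
    and sum1: "\<And>p. sum (Pw p) A1 = (\<Sum>i\<le>k. real (\<alpha> i) * (p ^ i * (1 - p) ^ (k - i)))"
    and sum0: "\<And>p. sum (Pw p) A0 = (\<Sum>i\<le>k. real (\<beta> i) * (p ^ i * (1 - p) ^ (k - i)))"
    using obtain_block_sets[OF bound] by blast
  have fin: "finite A0" "finite A1"
    using A finite_bool_lists_length finite_subset by blast+
  have sum01: "sum (Pw p) (A0 \<union> A1) = (\<Sum>i\<le>k. real (\<alpha> i + \<beta> i) * (p ^ i * (1 - p) ^ (k - i)))" for p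
    using A fin by (simp add: sum.union_disjoint sum0 sum1 algebra_simps sum.distrib)
  have "A0 \<union> A1 \<noteq> {}"
  proof
    assume "A0 \<union> A1 = {}"
    then have "(\<Sum>i\<le>k. real (\<alpha> i + \<beta> i) * ((1/2) ^ i * (1 - 1/2) ^ (k - i))) = 0"
      using sum01[of "1/2"] by simp
    with nonzero show False
      by (subst (asm) sum_nonneg_eq_0_iff) (auto simp flip: of_nat_add)
  qed
  then show ?thesis
    using has_block_simulationI[OF k A _ D] f by (simp add: sum01 sum1)
qed

section \<open>Bernstein coefficients and Polya's theorem\<close>

definition bernstein_coeff :: "'a::comm_ring_1 poly \<Rightarrow> nat \<Rightarrow> nat \<Rightarrow> 'a" where
  "bernstein_coeff g n i = (\<Sum>j\<le>i. coeff g j * of_nat ((n - j) choose (i - j)))"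

lemma poly_altdef_le:
  fixes g :: "'a::comm_ring_1 poly"
  assumes "degree g \<le> n"
  shows "poly g x = (\<Sum>j\<le>n. coeff g j * x ^ j)"
proof -
  have "(\<Sum>j\<le>n. coeff g j * x ^ j) = (\<Sum>j\<le>degree g. coeff g j * x ^ j)"
    by (rule sum.mono_neutral_right) (use assms in \<open>auto simp: coeff_eq_0\<close>)
  then show ?thesis
    by (simp add: poly_altdef)
qed

lemma power_bernstein_expansion:
  fixes x :: "'a::comm_ring_1"
  assumes "j \<le> n"
  shows "x ^ j = (\<Sum>i\<in>{j..n}. of_nat ((n - j) choose (i - j)) * (x ^ i * (1 - x) ^ (n - i)))"
proof -
  have "x ^ j = x ^ j * (x + (1 - x)) ^ (n - j)"
    by simp
  also have "\<dots> = x ^ j * (\<Sum>l\<le>n - j. of_nat ((n - j) choose l) * x ^ l * (1 - x) ^ (n - j - l))"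
    by (simp only: binomial_ring)
  also have "\<dots> = (\<Sum>l\<le>n - j. of_nat ((n - j) choose (j + l - j)) * (x ^ (j + l) * (1 - x) ^ (n - (j + l))))"
    by (simp add: sum_distrib_left power_add algebra_simps)
  also have "\<dots> = (\<Sum>i\<in>(+) j ` {..n - j}. of_nat ((n - j) choose (i - j)) * (x ^ i * (1 - x) ^ (n - i)))"
    by (simp add: sum.reindex)
  also have "(+) j ` {..n - j} = {j..n}"
    using assms by (simp add: atMost_atLeast0)
  finally show ?thesis .
qed

lemma poly_bernstein_expansion:
  fixes g :: "'a::comm_ring_1 poly"
  assumes "degree g \<le> n"
  shows "poly g x = (\<Sum>i\<le>n. bernstein_coeff g n i * (x ^ i * (1 - x) ^ (n - i)))"
proof -
  define F where "F j i = coeff g j * of_nat ((n - j) choose (i - j)) * (x ^ i * (1 - x) ^ (n - i))" for j i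
  have "poly g x = (\<Sum>j\<le>n. coeff g j * x ^ j)"
    by (rule poly_altdef_le[OF assms])
  also have "\<dots> = (\<Sum>j\<le>n. \<Sum>i | i \<in> {..n} \<and> j \<le> i. F j i)"
  proof (intro sum.cong refl)
    fix j
    assume "j \<in> {..n}"
    moreover have "{i. i \<in> {..n} \<and> j \<le> i} = {j..n}"
      by auto
    ultimately show "coeff g j * x ^ j = (\<Sum>i | i \<in> {..n} \<and> j \<le> i. F j i)"
      using power_bernstein_expansion[of j n x] by (simp add: F_def sum_distrib_left mult.assoc)
  qed
  also have "\<dots> = (\<Sum>i\<le>n. \<Sum>j | j \<in> {..n} \<and> j \<le> i. F j i)"
    by (rule sum.swap_restrict) auto
  also have "\<dots> = (\<Sum>i\<le>n. bernstein_coeff g n i * (x ^ i * (1 - x) ^ (n - i)))"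
  proof (intro sum.cong refl)
    fix i
    assume "i \<in> {..n}"
    then have "{j. j \<in> {..n} \<and> j \<le> i} = {..i}"
      by auto
    then show "(\<Sum>j | j \<in> {..n} \<and> j \<le> i. F j i) = bernstein_coeff g n i * (x ^ i * (1 - x) ^ (n - i))"
      by (simp add: F_def bernstein_coeff_def sum_distrib_right)
  qed
  finally show ?thesis .
qed

lemma abs_mult_diff_le:
  fixes a c u t :: real
  assumes "0 \<le> u" "u \<le> 1" "0 \<le> c" "c \<le> 1"
  shows "\<bar>a * u - c * t\<bar> \<le> \<bar>a - c\<bar> + \<bar>u - t\<bar>"
proof -
  have "a * u - c * t = (a - c) * u + c * (u - t)"
    by (simp add: algebra_simps)
  then have "\<bar>a * u - c * t\<bar> \<le> \<bar>a - c\<bar> * u + c * \<bar>u - t\<bar>"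
    using assms by (simp add: abs_mult abs_triangle_ineq[THEN order_trans])
  also have "\<dots> \<le> \<bar>a - c\<bar> * 1 + 1 * \<bar>u - t\<bar>"
    by (intro add_mono mult_mono) (use assms in auto)
  finally show ?thesis
    by simp
qed

text \<open>The ratio is \<open>\<Prod>l<j. (i - l) / (n - l)\<close>; each factor is within \<open>j / n\<close> of \<open>i / n\<close>.\<close>

lemma binomial_ratio_approx:
  assumes "j \<le> i" "i \<le> n" "0 < n"
  shows "\<bar>real ((n - j) choose (i - j)) / real (n choose i) - (real i / real n) ^ j\<bar> \<le> real j ^ 2 / real n"
  using assms(1)
proof (induction j)
  case 0
  have "real (n choose i) > 0"
    using assms by simp
  then show ?case
    by simp
next
  case (Suc j)
  define t where "t = real i / real n"
  define u where "u = real (i - j) / real (n - j)"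
  define b where "b = real ((n - j) choose (i - j)) / real (n choose i)"
  have ji: "j < i" "j < n"
    using Suc assms by auto
  obtain a c where a: "n - j = Suc a" and c: "i - j = Suc c"
    using ji by (metis Suc_diff_Suc)
  have "real (i - j) * real ((n - j) choose (i - j)) = real (n - j) * real ((n - Suc j) choose (i - Suc j))"
    using Suc_times_binomial[of c a] a c by (metis Suc_diff_Suc ji diff_Suc_Suc of_nat_mult old.nat.inject)
  moreover have "Y = X * (r / s)" if "r * X = s * Y" "s \<noteq> 0" for r s X Y :: real
    using that by (simp add: field_simps)
  ultimately have "real ((n - Suc j) choose (i - Suc j)) = real ((n - j) choose (i - j)) * u"
    unfolding u_def using ji by simp
  then have step: "real ((n - Suc j) choose (i - Suc j)) / real (n choose i) = b * u"
    unfolding b_def by simp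
  have IH: "\<bar>b - t ^ j\<bar> \<le> real j ^ 2 / real n"
    using Suc unfolding b_def t_def by simp
  have u01: "0 \<le> u" "u \<le> 1" and t01: "0 \<le> t" "t \<le> 1"
    using ji assms unfolding u_def t_def by auto
  have tu: "t - u = real j * real (n - i) / (real n * real (n - j))"
    unfolding t_def u_def using ji assms by (simp add: field_simps of_nat_diff)
  have "0 \<le> t - u"
    unfolding tu by simp
  have "t - u \<le> real j * real (n - j) / (real n * real (n - j))"
    unfolding tu using ji assms by (intro divide_right_mono mult_left_mono) auto
  also have "\<dots> = real j / real n"
    using ji by simp
  finally have "\<bar>u - t\<bar> \<le> real j / real n"
    using \<open>0 \<le> t - u\<close> by (simp add: abs_if)
  have "\<bar>b * u - t ^ j * t\<bar> \<le> \<bar>b - t ^ j\<bar> + \<bar>u - t\<bar>"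
    by (rule abs_mult_diff_le) (use u01 t01 in \<open>auto simp: power_le_one\<close>)
  also have "\<dots> \<le> real j ^ 2 / real n + real j / real n"
    using IH \<open>\<bar>u - t\<bar> \<le> real j / real n\<close> by simp
  also have "\<dots> \<le> real (Suc j) ^ 2 / real n"
    using assms by (simp add: field_simps power2_eq_square)
  finally show ?case
    using step unfolding t_def by (simp add: mult.commute)
qed

lemma bernstein_weight_approx:
  assumes "i \<le> n" "0 < n"
  shows "\<bar>(real i / real n) ^ j - (if j \<le> i then real ((n - j) choose (i - j)) / real (n choose i) else 0)\<bar>
          \<le> real j ^ 2 / real n"
proof (cases "j \<le> i")
  case True
  then show ?thesis
    using binomial_ratio_approx[OF True assms] by (simp add: abs_minus_commute)
next
  case False
  define t where "t = real i / real n"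
  have t01: "0 \<le> t" "t \<le> 1"
    using assms unfolding t_def by auto
  have "t ^ j \<le> t ^ 1"
    using False t01 by (intro power_decreasing) auto
  also have "t \<le> real j / real n"
    unfolding t_def using False assms by (simp add: divide_right_mono)
  also have "\<dots> \<le> real j ^ 2 / real n"
    using False by (intro divide_right_mono) (cases j, auto simp: power2_eq_square)
  finally show ?thesis
    using False t01 unfolding t_def by simp
qed

lemma bernstein_coeff_approx:
  fixes g :: "real poly"
  assumes n: "degree g \<le> n" "0 < n" and i: "i \<le> n"
  shows "\<bar>poly g (real i / real n) - bernstein_coeff g n i / real (n choose i)\<bar>
    \<le> (\<Sum>j\<le>degree g. \<bar>coeff g j\<bar> * real j ^ 2) / real n"
proof -
  define t where "t = real i / real n"
  define b where "b j = (if j \<le> i then real ((n - j) choose (i - j)) / real (n choose i) else 0)" for j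
  have "bernstein_coeff g n i / real (n choose i) = (\<Sum>j\<le>n. coeff g j * b j)"
  proof -
    have "(\<Sum>j\<le>n. coeff g j * b j) = (\<Sum>j\<le>i. coeff g j * b j)"
      by (rule sum.mono_neutral_right) (use i in \<open>auto simp: b_def\<close>)
    then show ?thesis
      by (simp add: bernstein_coeff_def b_def sum_divide_distrib)
  qed
  moreover have "poly g t = (\<Sum>j\<le>n. coeff g j * t ^ j)"
    by (rule poly_altdef_le[OF n(1)])
  ultimately have "\<bar>poly g t - bernstein_coeff g n i / real (n choose i)\<bar> = \<bar>\<Sum>j\<le>n. coeff g j * (t ^ j - b j)\<bar>"
    by (simp add: sum_subtractf algebra_simps)
  also have "\<dots> \<le> (\<Sum>j\<le>n. \<bar>coeff g j * (t ^ j - b j)\<bar>)"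
    by (rule sum_abs)
  also have "\<dots> \<le> (\<Sum>j\<le>n. \<bar>coeff g j\<bar> * (real j ^ 2 / real n))"
  proof (rule sum_mono)
    fix j
    have "\<bar>t ^ j - b j\<bar> \<le> real j ^ 2 / real n"
      using bernstein_weight_approx[OF i n(2), of j] unfolding t_def b_def .
    then show "\<bar>coeff g j * (t ^ j - b j)\<bar> \<le> \<bar>coeff g j\<bar> * (real j ^ 2 / real n)"
      unfolding abs_mult by (rule mult_left_mono) simp
  qed
  also have "\<dots> = (\<Sum>j\<le>degree g. \<bar>coeff g j\<bar> * (real j ^ 2 / real n))"
    by (rule sum.mono_neutral_right) (use n in \<open>auto simp: coeff_eq_0\<close>)
  also have "\<dots> = (\<Sum>j\<le>degree g. \<bar>coeff g j\<bar> * real j ^ 2) / real n"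
    by (simp add: sum_divide_distrib)
  finally show ?thesis
    unfolding t_def .
qed

text \<open>Polya's theorem for \<open>[0, 1]\<close>: the normalised coefficients approach the values of \<open>g\<close>,
  so they are eventually bounded below by \<open>min g > 0\<close>.\<close>

lemma bernstein_coeff_eventually_pos:
  fixes g :: "real poly"
  assumes pos: "\<And>x. 0 \<le> x \<Longrightarrow> x \<le> 1 \<Longrightarrow> poly g x > 0"
  shows "\<exists>N. \<forall>n\<ge>N. \<forall>i\<le>n. bernstein_coeff g n i > 0"
proof -
  have "\<exists>x\<in>{0..1}. \<forall>y\<in>{0..1}. poly g x \<le> poly g y"
    by (rule continuous_attains_inf) (auto intro!: continuous_intros)
  then obtain x0 where x0: "x0 \<in> {0..1}" "\<And>y. y \<in> {0..1} \<Longrightarrow> poly g x0 \<le> poly g y"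
    by blast
  define m where "m = poly g x0"
  have m: "m > 0" "\<And>y. 0 \<le> y \<Longrightarrow> y \<le> 1 \<Longrightarrow> m \<le> poly g y"
    using x0 pos unfolding m_def by auto
  define C where "C = (\<Sum>j\<le>degree g. \<bar>coeff g j\<bar> * real j ^ 2)"
  define N where "N = degree g + nat \<lceil>C / m\<rceil> + 1"
  have "bernstein_coeff g n i > 0" if "N \<le> n" "i \<le> n" for n i
  proof -
    have n: "degree g \<le> n" "0 < n"
      using that unfolding N_def by auto
    have "C / m < real n"
      using that unfolding N_def by linarith
    then have "C / real n < m"
      using m n by (simp add: field_simps)
    moreover have "m \<le> poly g (real i / real n)"
      using m that n by auto
    ultimately have "bernstein_coeff g n i / real (n choose i) > 0"
      using bernstein_coeff_approx[OF n that(2)] unfolding C_def by linarith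
    then show ?thesis
      using that by (simp add: zero_less_divide_iff)
  qed
  then show ?thesis
    by blast
qed

lemma sum_bernstein_shift:
  fixes x :: real
  shows "x ^ a * (1 - x) ^ b * (\<Sum>i\<le>m. c i * (x ^ i * (1 - x) ^ (m - i))) =
    (\<Sum>i\<le>m + a + b. (if a \<le> i \<and> i - a \<le> m then c (i - a) else 0) * (x ^ i * (1 - x) ^ (m + a + b - i)))"
proof -
  have "(\<Sum>i\<le>m + a + b. (if a \<le> i \<and> i - a \<le> m then c (i - a) else 0) * (x ^ i * (1 - x) ^ (m + a + b - i)))
      = (\<Sum>i\<in>(\<lambda>l. l + a) ` {..m}. c (i - a) * (x ^ i * (1 - x) ^ (m + a + b - i)))"
  proof (rule sum.mono_neutral_cong_right)
    show "\<forall>i\<in>{..m + a + b} - (\<lambda>l. l + a) ` {..m}.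
      (if a \<le> i \<and> i - a \<le> m then c (i - a) else 0) * (x ^ i * (1 - x) ^ (m + a + b - i)) = 0"
    proof
      fix i
      assume i: "i \<in> {..m + a + b} - (\<lambda>l. l + a) ` {..m}"
      have "\<not> (a \<le> i \<and> i - a \<le> m)"
      proof
        assume "a \<le> i \<and> i - a \<le> m"
        then have "i = (i - a) + a" "i - a \<in> {..m}"
          by auto
        with i show False
          by blast
      qed
      then have "(if a \<le> i \<and> i - a \<le> m then c (i - a) else 0) = 0"
        by (rule if_not_P)
      then show "(if a \<le> i \<and> i - a \<le> m then c (i - a) else 0) * (x ^ i * (1 - x) ^ (m + a + b - i)) = 0"
        by simp
    qed
  qed auto
  also have "\<dots> = (\<Sum>l\<le>m. c l * (x ^ (l + a) * (1 - x) ^ (m + a + b - (l + a))))"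
    by (subst sum.reindex) (auto simp: inj_on_def)
  also have "\<dots> = (\<Sum>l\<le>m. x ^ a * (1 - x) ^ b * (c l * (x ^ l * (1 - x) ^ (m - l))))"
  proof (intro sum.cong refl)
    fix l
    assume "l \<in> {..m}"
    then have "m + a + b - (l + a) = (m - l) + b"
      by auto
    then show "c l * (x ^ (l + a) * (1 - x) ^ (m + a + b - (l + a))) =
        x ^ a * (1 - x) ^ b * (c l * (x ^ l * (1 - x) ^ (m - l)))"
      by (simp add: power_add algebra_simps)
  qed
  finally show ?thesis
    by (simp add: sum_distrib_left)
qed

section \<open>From rational functions to block simulations\<close>

abbreviation rpoly :: "rat poly \<Rightarrow> real \<Rightarrow> real" where
  "rpoly g x \<equiv> poly (map_poly of_rat g) x"

interpretation of_rat_poly_hom: map_poly_comm_ring_hom "of_rat :: rat \<Rightarrow> real" ..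

lemma rpoly_of_rat: "rpoly g (of_rat x) = of_rat (poly g x)"
  by (induct g) (simp_all add: map_poly_pCons of_rat_add of_rat_mult)

lemma poly_pos_if_no_root_between:
  fixes q :: "real poly"
  assumes no_root: "\<And>z. min x y < z \<Longrightarrow> z < max x y \<Longrightarrow> poly q z \<noteq> 0"
    and "poly q x > 0" "poly q y \<noteq> 0"
  shows "poly q y > 0"
proof (rule ccontr)
  assume "\<not> poly q y > 0"
  with assms have "poly q x * poly q y < 0"
    by (simp add: mult_pos_neg)
  then have "\<exists>z. min x y < z \<and> z < max x y \<and> poly q z = 0"
    by (cases x y rule: linorder_cases) (use poly_IVT[of x y q] poly_IVT[of y x q] in \<open>auto simp: mult.commute\<close>)
  with no_root show False
    by blast
qed

lemma poly_factor_endpoint_roots: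
  fixes g :: "'a::idom poly"
  assumes "g \<noteq> 0"
  obtains a b h where "g = [:0, 1:] ^ a * [:- 1, 1:] ^ b * h" "poly h 0 \<noteq> 0" "poly h 1 \<noteq> 0"
proof -
  obtain g1 where g1: "g = [:- 0, 1:] ^ order 0 g * g1" "\<not> [:- 0, 1:] dvd g1"
    using order_decomp[OF assms] by blast
  then have "g1 \<noteq> 0"
    by auto
  then obtain h where h: "g1 = [:- 1, 1:] ^ order 1 g1 * h" "\<not> [:- 1, 1:] dvd h"
    using order_decomp by blast
  have "poly g1 0 \<noteq> 0" "poly h 1 \<noteq> 0"
    using g1(2) h(2) by (simp_all add: poly_eq_0_iff_dvd)
  then have "poly h 0 \<noteq> 0"
    using h(1) by (metis mult_zero_right poly_mult)
  with g1(1) h(1) \<open>poly h 1 \<noteq> 0\<close> show ?thesis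
    using that[of "order 0 g" "order 1 g1" h] by (simp add: mult.assoc)
qed

lemma obtain_endpoint_factorization_pos:
  fixes g :: "rat poly"
  assumes pos: "\<And>x::real. 0 < x \<Longrightarrow> x < 1 \<Longrightarrow> rpoly g x > 0"
  obtains a b h where "\<And>x. rpoly g x = x ^ a * (1 - x) ^ b * rpoly h x"
    and "\<And>x. 0 \<le> x \<Longrightarrow> x \<le> 1 \<Longrightarrow> rpoly h x > 0"
proof -
  have "g \<noteq> 0"
    using pos[of "1/2"] by auto
  then obtain a b h where g: "g = [:0, 1:] ^ a * [:- 1, 1:] ^ b * h" and h: "poly h 0 \<noteq> 0" "poly h 1 \<noteq> 0"
    by (rule poly_factor_endpoint_roots)
  define h' where "h' = Polynomial.smult ((- 1) ^ b) h"
  have g_h': "rpoly g x = x ^ a * (1 - x) ^ b * rpoly h' x" for x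
  proof -
    have "(x - 1) ^ b = (- 1) ^ b * (1 - x) ^ b"
      by (simp flip: power_mult_distrib)
    then show ?thesis
      unfolding g h'_def by (simp add: hom_distribs of_rat_power)
  qed
  have h'_pos_open: "rpoly h' x > 0" if "0 < x" "x < 1" for x
  proof -
    have "0 < x ^ a * (1 - x) ^ b"
      using that by simp
    with pos[OF that] show ?thesis
      unfolding g_h' by (simp add: zero_less_mult_iff)
  qed
  have h'_endpoints: "rpoly h' 0 \<noteq> 0" "rpoly h' 1 \<noteq> 0"
    using rpoly_of_rat[of h' 0] rpoly_of_rat[of h' 1] h unfolding h'_def by auto
  have no_root: "rpoly h' z \<noteq> 0" if "0 < z" "z < 1" for z
    using h'_pos_open[OF that] by simp
  have "rpoly h' x > 0" if x: "0 \<le> x" "x \<le> 1" for x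
  proof (rule poly_pos_if_no_root_between[of "1/2"])
    show "rpoly h' z \<noteq> 0" if "min (1/2) x < z" "z < max (1/2) x" for z
      using that x by (intro no_root) auto
    show "rpoly h' (1/2) > 0"
      by (rule h'_pos_open) auto
    show "rpoly h' x \<noteq> 0"
      using x h'_endpoints no_root by (cases "x = 0 \<or> x = 1") auto
  qed
  with g_h' show ?thesis
    by (rule that)
qed

text \<open>Polya's theorem needs positivity on the closed interval, so the roots of \<open>g\<close> at the
  endpoints are split off first.\<close>

lemma bernstein_rep_nonneg:
  fixes g :: "rat poly"
  assumes pos: "\<And>x::real. 0 < x \<Longrightarrow> x < 1 \<Longrightarrow> rpoly g x > 0"
  shows "\<exists>N. \<forall>n\<ge>N. \<exists>c. (\<forall>i\<le>n. c i \<ge> 0) \<and>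
           (\<forall>x::real. rpoly g x = (\<Sum>i\<le>n. of_rat (c i) * (x ^ i * (1 - x) ^ (n - i))))"
proof -
  obtain a b h where g_h: "\<And>x. rpoly g x = x ^ a * (1 - x) ^ b * rpoly h x"
    and h_pos: "\<And>x. 0 \<le> x \<Longrightarrow> x \<le> 1 \<Longrightarrow> rpoly h x > 0"
    using obtain_endpoint_factorization_pos[OF pos] by blast
  obtain N0 where N0: "\<And>n i. n \<ge> N0 \<Longrightarrow> i \<le> n \<Longrightarrow> bernstein_coeff (map_poly of_rat h :: real poly) n i > 0"
    using bernstein_coeff_eventually_pos[OF h_pos] by blast
  have "\<exists>c. (\<forall>i\<le>n. c i \<ge> 0) \<and> (\<forall>x::real. rpoly g x = (\<Sum>i\<le>n. of_rat (c i) * (x ^ i * (1 - x) ^ (n - i))))"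
    if "n \<ge> max N0 (degree h) + a + b" for n
  proof -
    define m where "m = n - a - b"
    have m: "m \<ge> N0" "m \<ge> degree h" "n = m + a + b"
      using that unfolding m_def by auto
    have of_rat_bernstein: "bernstein_coeff (map_poly of_rat h) m i = (of_rat (bernstein_coeff h m i) :: real)" for i
      by (simp add: bernstein_coeff_def of_rat_sum of_rat_mult)
    define c where "c i = (if a \<le> i \<and> i - a \<le> m then bernstein_coeff h m (i - a) else 0)" for i
    have "c i \<ge> 0" for i
      using N0[OF m(1)] unfolding c_def of_rat_bernstein by (auto simp: less_imp_le)
    moreover have "rpoly g x = (\<Sum>i\<le>n. of_rat (c i) * (x ^ i * (1 - x) ^ (n - i)))" for x
    proof -
      have "rpoly h x = (\<Sum>i\<le>m. of_rat (bernstein_coeff h m i) * (x ^ i * (1 - x) ^ (m - i)))"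
        unfolding of_rat_bernstein[symmetric] by (rule poly_bernstein_expansion) (use m in simp)
      then have "rpoly g x = x ^ a * (1 - x) ^ b * (\<Sum>i\<le>m. of_rat (bernstein_coeff h m i) * (x ^ i * (1 - x) ^ (m - i)))"
        unfolding g_h by simp
      also have "\<dots> = (\<Sum>i\<le>n. of_rat (c i) * (x ^ i * (1 - x) ^ (n - i)))"
        unfolding sum_bernstein_shift m(3) c_def by (intro sum.cong) auto
      finally show ?thesis .
    qed
    ultimately show ?thesis
      by blast
  qed
  then show ?thesis
    by blast
qed

lemma rational_simulable_normalized:
  assumes "rational_simulable D f"
  obtains P Q where "\<And>x. 0 < x \<Longrightarrow> x < 1 \<Longrightarrow> 0 < rpoly P x \<and> rpoly P x < rpoly Q x"
    and "\<And>p. p \<in> D \<Longrightarrow> f p = rpoly P p / rpoly Q p"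
proof -
  obtain P Q where PQ: "\<And>x. 0 < x \<Longrightarrow> x < 1 \<Longrightarrow>
      rpoly Q x \<noteq> 0 \<and> 0 < rpoly P x / rpoly Q x \<and> rpoly P x / rpoly Q x < 1"
    and f: "\<And>p. p \<in> D \<Longrightarrow> f p = rpoly P p / rpoly Q p"
    using assms unfolding rational_simulable_def by blast
  have same_sign: "rpoly R x > 0"
    if no_root: "\<And>z. 0 < z \<Longrightarrow> z < 1 \<Longrightarrow> rpoly R z \<noteq> 0"
      and "rpoly R (1/2) > 0" "0 < x" "x < 1" for R x
  proof (rule poly_pos_if_no_root_between[of "1/2"])
    show "rpoly R z \<noteq> 0" if "min (1/2) x < z" "z < max (1/2) x" for z
      using that \<open>0 < x\<close> \<open>x < 1\<close> by (intro no_root) auto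
  qed (use that in auto)
  have Q_no_root: "rpoly Q z \<noteq> 0" if "0 < z" "z < 1" for z
    using PQ[OF that] by blast
  show ?thesis
  proof (cases "rpoly Q (1/2) > 0")
    case True
    show ?thesis
    proof (rule that[of P Q])
      fix x :: real
      assume x: "0 < x" "x < 1"
      have "rpoly Q x > 0"
        using same_sign[OF Q_no_root True x] by blast
      with PQ[OF x] show "0 < rpoly P x \<and> rpoly P x < rpoly Q x"
        by (simp add: zero_less_divide_iff divide_less_eq)
    qed (rule f)
  next
    case False
    with PQ[of "1/2"] have "rpoly (- Q) (1/2) > 0"
      by (simp add: hom_distribs)
    show ?thesis
    proof (rule that[of "- P" "- Q"])
      fix x :: real
      assume x: "0 < x" "x < 1"
      have "rpoly (- Q) x > 0"
        by (rule same_sign[OF _ \<open>rpoly (- Q) (1/2) > 0\<close> x]) (simp add: hom_distribs Q_no_root)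
      with PQ[OF x] show "0 < rpoly (- P) x \<and> rpoly (- P) x < rpoly (- Q) x"
        by (simp add: hom_distribs zero_less_divide_iff divide_less_eq)
    qed (simp add: f hom_distribs)
  qed
qed

lemma obtain_common_denominator:
  fixes S :: "rat set"
  assumes "finite S"
  obtains M :: nat where "M > 0" "\<And>r. r \<in> S \<Longrightarrow> of_nat M * r \<in> \<int>"
  using assms
proof (induction S arbitrary: thesis rule: finite_induct)
  case empty
  then show ?case
    by blast
next
  case (insert r S)
  then obtain M where M: "M > 0" "\<And>s. s \<in> S \<Longrightarrow> of_nat M * s \<in> \<int>"
    by blast
  obtain a b where "quotient_of r = (a, b)"
    by (cases "quotient_of r")
  then have b: "b > 0" and r: "r = of_int a / of_int b"
    by (simp_all add: quotient_of_denom_pos quotient_of_div)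
  have "of_nat (M * nat b) * s \<in> \<int>" if "s \<in> insert r S" for s
  proof (cases "s = r")
    case True
    then have "of_nat (M * nat b) * s = of_int (int M * a)"
      using b r by simp
    then show ?thesis
      by (metis Ints_of_int)
  next
    case False
    with that M(2) obtain z where "of_nat M * s = of_int z"
      by (auto elim: Ints_cases)
    then have "of_nat (M * nat b) * s = of_int (z * b)"
      using b by (simp add: algebra_simps)
    then show ?thesis
      by (metis Ints_of_int)
  qed
  with M(1) b show ?case
    using insert.prems[of "M * nat b"] by simp
qed

lemma of_rat_nat_floor_Ints: "r \<in> \<int> \<Longrightarrow> 0 \<le> r \<Longrightarrow> real (nat \<lfloor>r\<rfloor>) = of_rat r"
  by (auto elim!: Ints_cases simp: of_rat_of_int_eq)

lemma obtain_nat_bernstein_reps: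
  assumes P: "\<And>x. 0 < x \<Longrightarrow> x < 1 \<Longrightarrow> rpoly P x > 0"
    and H: "\<And>x. 0 < x \<Longrightarrow> x < 1 \<Longrightarrow> rpoly H x > 0"
  obtains M :: nat and \<alpha> :: "nat \<Rightarrow> nat" and n :: nat and \<beta> :: "nat \<Rightarrow> nat" where "M > 0"
    "\<And>x. real M * rpoly P x = (\<Sum>i\<le>n. real (\<alpha> i) * (x ^ i * (1 - x) ^ (n - i)))"
    "\<And>x. real M * rpoly H x = (\<Sum>i\<le>n. real (\<beta> i) * (x ^ i * (1 - x) ^ (n - i)))"
proof -
  obtain N1 N2 where N1: "\<And>n. n \<ge> N1 \<Longrightarrow> \<exists>c. (\<forall>i\<le>n. c i \<ge> 0) \<and>
      (\<forall>x::real. rpoly P x = (\<Sum>i\<le>n. of_rat (c i) * (x ^ i * (1 - x) ^ (n - i))))"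
    and N2: "\<And>n. n \<ge> N2 \<Longrightarrow> \<exists>c. (\<forall>i\<le>n. c i \<ge> 0) \<and>
      (\<forall>x::real. rpoly H x = (\<Sum>i\<le>n. of_rat (c i) * (x ^ i * (1 - x) ^ (n - i))))"
    using bernstein_rep_nonneg[OF P] bernstein_rep_nonneg[OF H] by blast
  define n where "n = max N1 N2"
  obtain c e where c: "\<And>i. i \<le> n \<Longrightarrow> c i \<ge> 0"
      "\<And>x::real. rpoly P x = (\<Sum>i\<le>n. of_rat (c i) * (x ^ i * (1 - x) ^ (n - i)))"
    and e: "\<And>i. i \<le> n \<Longrightarrow> e i \<ge> 0"
      "\<And>x::real. rpoly H x = (\<Sum>i\<le>n. of_rat (e i) * (x ^ i * (1 - x) ^ (n - i)))"
    using N1[of n] N2[of n] unfolding n_def by auto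
  obtain M :: nat where M: "M > 0" "\<And>r. r \<in> c ` {..n} \<union> e ` {..n} \<Longrightarrow> of_nat M * r \<in> \<int>"
    using obtain_common_denominator[of "c ` {..n} \<union> e ` {..n}"] by blast
  have scale: "real (nat \<lfloor>of_nat M * d i\<rfloor>) = real M * of_rat (d i)"
    if "i \<le> n" "d = c \<or> d = e" for d i
    using that M(2)[of "d i"] c(1) e(1) by (subst of_rat_nat_floor_Ints) (auto simp: of_rat_mult)
  have rep_P: "real M * rpoly P x = (\<Sum>i\<le>n. real (nat \<lfloor>of_nat M * c i\<rfloor>) * (x ^ i * (1 - x) ^ (n - i)))" for x
    unfolding c(2) sum_distrib_left by (intro sum.cong) (auto simp: scale)
  have rep_H: "real M * rpoly H x = (\<Sum>i\<le>n. real (nat \<lfloor>of_nat M * e i\<rfloor>) * (x ^ i * (1 - x) ^ (n - i)))" for x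
    unfolding e(2) sum_distrib_left by (intro sum.cong) (auto simp: scale)
  show ?thesis
    using M(1) rep_P rep_H by (rule that)
qed

text \<open>Multiplying by \<open>x\<^sup>j (1 - x)\<^sup>j\<close> shifts the coefficients to the middle of a basis of
  degree \<open>k = n + 2j\<close>, where the binomial coefficients are at least \<open>k\<close>; for
  \<open>j > \<Sum> (\<alpha>\<^sub>i + \<beta>\<^sub>i)\<close> every coefficient fits below them.\<close>

lemma bernstein_pad_below_binomial:
  fixes n :: nat and \<alpha> \<beta> :: "nat \<Rightarrow> nat"
  obtains k :: nat and \<alpha>' \<beta>' :: "nat \<Rightarrow> nat" and j :: nat
  where "k \<ge> 1" "\<And>i. i \<le> k \<Longrightarrow> \<alpha>' i + \<beta>' i \<le> k choose i"
    "\<And>x::real. x ^ j * (1 - x) ^ j * (\<Sum>i\<le>n. real (\<alpha> i) * (x ^ i * (1 - x) ^ (n - i))) =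
      (\<Sum>i\<le>k. real (\<alpha>' i) * (x ^ i * (1 - x) ^ (k - i)))"
    "\<And>x::real. x ^ j * (1 - x) ^ j * (\<Sum>i\<le>n. real (\<alpha> i + \<beta> i) * (x ^ i * (1 - x) ^ (n - i))) =
      (\<Sum>i\<le>k. real (\<alpha>' i + \<beta>' i) * (x ^ i * (1 - x) ^ (k - i)))"
proof -
  define j where "j = (\<Sum>i\<le>n. \<alpha> i + \<beta> i) + 1"
  define k where "k = n + j + j"
  define shift where "shift \<gamma> i = (if j \<le> i \<and> i - j \<le> n then \<gamma> (i - j) else 0)" for \<gamma> :: "nat \<Rightarrow> nat" and i
  have shifted: "x ^ j * (1 - x) ^ j * (\<Sum>i\<le>n. real (\<gamma> i) * (x ^ i * (1 - x) ^ (n - i))) =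
      (\<Sum>i\<le>k. real (shift \<gamma> i) * (x ^ i * (1 - x) ^ (k - i)))" for \<gamma> and x :: real
    unfolding sum_bernstein_shift k_def shift_def by (intro sum.cong) auto
  have shift_add: "shift (\<lambda>i. \<alpha> i + \<beta> i) = (\<lambda>i. shift \<alpha> i + shift \<beta> i)"
    by (auto simp: shift_def)
  show ?thesis
  proof (rule that[of k "shift \<alpha>" "shift \<beta>" j])
    show "1 \<le> k"
      unfolding k_def j_def by simp
    show "shift \<alpha> i + shift \<beta> i \<le> k choose i" if "i \<le> k" for i
    proof (cases "j \<le> i \<and> i - j \<le> n")
      case True
      have "\<alpha> (i - j) + \<beta> (i - j) \<le> j"
        using True member_le_sum[of "i - j" "{..n}" "\<lambda>i. \<alpha> i + \<beta> i"] unfolding j_def by simp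
      also have "j \<le> k"
        unfolding k_def by simp
      also have "k \<le> k choose i"
        using True by (intro upper_le_binomial) (auto simp: k_def j_def)
      finally show ?thesis
        using True unfolding shift_def by simp
    qed (auto simp: shift_def)
  qed (simp_all only: shifted shift_add)
qed

lemma rational_simulable_imp_block:
  assumes D: "D \<subseteq> {0<..<1}" and "rational_simulable D f"
  shows "has_block_simulation D f"
proof -
  obtain P Q where PQ: "\<And>x. 0 < x \<Longrightarrow> x < 1 \<Longrightarrow> 0 < rpoly P x \<and> rpoly P x < rpoly Q x"
    and f: "\<And>p. p \<in> D \<Longrightarrow> f p = rpoly P p / rpoly Q p"
    using rational_simulable_normalized[OF assms(2)] by blast
  have P_pos: "rpoly P x > 0" if "0 < x" "x < 1" for x
    using PQ[OF that] by blast
  have QP_pos: "rpoly (Q - P) x > 0" if "0 < x" "x < 1" for x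
    using PQ[OF that] by (simp only: of_rat_poly_hom.hom_minus poly_diff diff_gt_0_iff_gt)
  obtain n M and \<alpha> \<beta> :: "nat \<Rightarrow> nat" where M: "M > 0"
    and rep_P: "\<And>x. real M * rpoly P x = (\<Sum>i\<le>n. real (\<alpha> i) * (x ^ i * (1 - x) ^ (n - i)))"
    and rep_QP: "\<And>x. real M * rpoly (Q - P) x = (\<Sum>i\<le>n. real (\<beta> i) * (x ^ i * (1 - x) ^ (n - i)))"
    by (rule obtain_nat_bernstein_reps[OF P_pos QP_pos]) (assumption | rule that)+
  have rep_Q: "real M * rpoly Q x = (\<Sum>i\<le>n. real (\<alpha> i + \<beta> i) * (x ^ i * (1 - x) ^ (n - i)))" for x
  proof -
    have "real M * rpoly Q x = real M * rpoly P x + real M * rpoly (Q - P) x"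
      by (simp only: of_rat_poly_hom.hom_minus poly_diff) (simp add: algebra_simps)
    also have "\<dots> = (\<Sum>i\<le>n. real (\<alpha> i + \<beta> i) * (x ^ i * (1 - x) ^ (n - i)))"
      unfolding rep_P rep_QP by (simp add: sum.distrib[symmetric] algebra_simps)
    finally show ?thesis .
  qed
  show ?thesis
  proof (rule bernstein_pad_below_binomial[where n = n and \<alpha> = \<alpha> and \<beta> = \<beta>])
    fix k j and \<alpha>' \<beta>' :: "nat \<Rightarrow> nat"
    assume k: "k \<ge> 1" and bound: "\<And>i. i \<le> k \<Longrightarrow> \<alpha>' i + \<beta>' i \<le> k choose i"
      and pad_P: "\<And>x::real. x ^ j * (1 - x) ^ j * (\<Sum>i\<le>n. real (\<alpha> i) * (x ^ i * (1 - x) ^ (n - i))) =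
        (\<Sum>i\<le>k. real (\<alpha>' i) * (x ^ i * (1 - x) ^ (k - i)))"
      and pad_Q: "\<And>x::real. x ^ j * (1 - x) ^ j * (\<Sum>i\<le>n. real (\<alpha> i + \<beta> i) * (x ^ i * (1 - x) ^ (n - i))) =
        (\<Sum>i\<le>k. real (\<alpha>' i + \<beta>' i) * (x ^ i * (1 - x) ^ (k - i)))"
    show ?thesis
    proof (rule has_block_simulation_bernstein[OF k bound _ D])
      show "\<exists>i\<le>k. \<alpha>' i + \<beta>' i > 0"
      proof (rule ccontr)
        assume "\<not> (\<exists>i\<le>k. \<alpha>' i + \<beta>' i > 0)"
        then have "(1/2) ^ j * (1 - 1/2) ^ j * (real M * rpoly Q (1/2)) = 0"
          unfolding rep_Q pad_Q by simp
        with M PQ[of "1/2"] show False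
          by simp
      qed
      fix p
      assume "p \<in> D"
      with D have p: "0 < p" "p < 1"
        by auto
      have "(p ^ j * (1 - p) ^ j) * real M > 0"
        using p M by simp
      then have "f p = ((p ^ j * (1 - p) ^ j) * (real M * rpoly P p)) / ((p ^ j * (1 - p) ^ j) * (real M * rpoly Q p))"
        unfolding f[OF \<open>p \<in> D\<close>] by (simp only: mult.assoc[symmetric] mult_divide_mult_cancel_left)
      then show "f p = (\<Sum>i\<le>k. real (\<alpha>' i) * (p ^ i * (1 - p) ^ (k - i))) /
          (\<Sum>i\<le>k. real (\<alpha>' i + \<beta>' i) * (p ^ i * (1 - p) ^ (k - i)))"
        unfolding rep_P rep_Q pad_P pad_Q .
    qed
  qed
qed

section \<open>From block simulations to automata\<close>

lemma dstar_Nil [simp]: "dstar \<delta> s [] = s"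
  by (simp add: dstar_def)

lemma dstar_Cons [simp]: "dstar \<delta> s (b # w) = dstar \<delta> (\<delta> s b) w"
  by (simp add: dstar_def)

lemma dstar_snoc [simp]: "dstar \<delta> s (w @ [b]) = \<delta> (dstar \<delta> s w) b"
  by (simp add: dstar_def)

lemma dstar_append: "dstar \<delta> s (u @ w) = dstar \<delta> (dstar \<delta> s u) w"
  by (simp add: dstar_def)

text \<open>The automaton reading blocks: state \<open>0\<close> and \<open>1\<close> are the outputs, and a proper prefix \<open>w\<close> of
  the current block is stored in state \<open>to_nat w + 2\<close>.\<close>

locale block_automaton =
  fixes k :: nat and A0 A1 :: "bool list set"
  assumes k_pos: "k \<ge> 1" and A0: "A0 \<subseteq> {w. length w = k}" and A1: "A1 \<subseteq> {w. length w = k}"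
    and A01: "A0 \<inter> A1 = {}"
begin

definition discarded :: "bool list set" where
  "discarded = {w. length w = k} - (A0 \<union> A1)"

sublocale blocks k discarded
  using k_pos by unfold_locales (auto simp: discarded_def)

definition buffer :: "bool list \<Rightarrow> nat" where
  "buffer w = to_nat w + 2"

definition block_output :: "bool list \<Rightarrow> nat" where
  "block_output w = (if w \<in> A0 then 0 else if w \<in> A1 then 1 else buffer [])"

definition step :: "nat \<Rightarrow> bool \<Rightarrow> nat" where
  "step s b = (if s < 2 then s else
     (let w = from_nat (s - 2) @ [b] in if k \<le> length w then block_output w else buffer w))"

definition states :: "nat set" where
  "states = {0, 1} \<union> buffer ` {w. length w < k}"

lemma buffer_ge_2: "buffer w \<ge> 2"
  by (simp add: buffer_def)

lemma step_buffer: "step (buffer r) b = (if k \<le> length (r @ [b]) then block_output (r @ [b]) else buffer (r @ [b]))"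
  by (simp add: step_def buffer_def Let_def)

lemma step_final: "s < 2 \<Longrightarrow> step s b = s"
  by (simp add: step_def)

lemma block_output_final: "v \<in> A0 \<union> A1 \<Longrightarrow> block_output v < 2"
  by (auto simp: block_output_def)

lemma is_automaton_states: "is_automaton states (buffer []) step {0} {1}"
  unfolding is_automaton_def
proof (intro conjI ballI allI)
  have "finite {w :: bool list. length w < k}"
    using finite_lists_length_le[of "UNIV :: bool set" k] by (rule finite_subset[rotated]) auto
  then show "finite states"
    unfolding states_def by simp
  show "buffer [] \<in> states"
    unfolding states_def using k_pos by auto
  fix s b
  assume "s \<in> states"
  then consider "s < 2" | r where "s = buffer r" "length r < k"
    unfolding states_def by auto
  then show "step s b \<in> states"
  proof cases
    case 1
    then show ?thesis
      using \<open>s \<in> states\<close> by (simp add: step_final)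
  next
    case 2
    then show ?thesis
      using k_pos by (auto simp: step_buffer states_def block_output_def)
  qed
qed (auto simp: states_def step_final)

lemma run_cases:
  "(\<exists>us r. x = concat us @ r \<and> set us \<subseteq> discarded \<and> length r < k \<and> dstar step (buffer []) x = buffer r) \<or>
   (\<exists>us v z. x = concat us @ v @ z \<and> set us \<subseteq> discarded \<and> v \<in> A0 \<union> A1 \<and>
      dstar step (buffer []) (concat us @ v) = block_output v \<and> dstar step (buffer []) x = block_output v)"
proof (induction x rule: rev_induct)
  case Nil
  show ?case
    using k_pos by (intro disjI1 exI[of _ "[]"]) auto
next
  case (snoc b x)
  then show ?case
  proof
    assume "\<exists>us r. x = concat us @ r \<and> set us \<subseteq> discarded \<and> length r < k \<and> dstar step (buffer []) x = buffer r"
    then obtain us r where x: "x = concat us @ r" "set us \<subseteq> discarded" "length r < k"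
      and buffered: "dstar step (buffer []) x = buffer r"
      by blast
    have run: "dstar step (buffer []) (x @ [b]) = step (buffer r) b"
      by (simp only: dstar_snoc buffered)
    show ?thesis
    proof (cases "k \<le> length (r @ [b])")
      case False
      then show ?thesis
        using x run by (intro disjI1 exI[of _ us] exI[of _ "r @ [b]"]) (auto simp: step_buffer)
    next
      case True
      with x have block: "length (r @ [b]) = k"
        by simp
      show ?thesis
      proof (cases "r @ [b] \<in> A0 \<union> A1")
        case True
        then show ?thesis
          using x run block
          by (intro disjI2 exI[of _ us] exI[of _ "r @ [b]"] exI[of _ "[]"]) (auto simp: step_buffer)
      next
        case False
        then have "r @ [b] \<in> discarded" "block_output (r @ [b]) = buffer []"
          using block by (auto simp: discarded_def block_output_def)
        then show ?thesis
          using x run block k_pos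
          by (intro disjI1 exI[of _ "us @ [r @ [b]]"] exI[of _ "[]"]) (auto simp: step_buffer)
      qed
    qed
  next
    assume "\<exists>us v z. x = concat us @ v @ z \<and> set us \<subseteq> discarded \<and> v \<in> A0 \<union> A1 \<and>
      dstar step (buffer []) (concat us @ v) = block_output v \<and> dstar step (buffer []) x = block_output v"
    then obtain us v z where uvz: "x = concat us @ v @ z" "set us \<subseteq> discarded" "v \<in> A0 \<union> A1"
      "dstar step (buffer []) (concat us @ v) = block_output v"
      and stopped: "dstar step (buffer []) x = block_output v"
      by blast
    have "dstar step (buffer []) (x @ [b]) = block_output v"
      using block_output_final[OF uvz(3)] by (simp only: dstar_snoc stopped step_final)
    with uvz show ?thesis
      by (intro disjI2 exI[of _ us] exI[of _ v] exI[of _ "z @ [b]"]) simp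
  qed
qed


lemma block_length: "v \<in> A0 \<union> A1 \<Longrightarrow> length v = k \<and> v \<notin> discarded"
  using A0 A1 by (auto simp: discarded_def)

lemma run_stops_at_block:
  assumes "set us \<subseteq> discarded" "v \<in> A0 \<union> A1"
  shows "dstar step (buffer []) (concat us @ v) = block_output v"
  using run_cases[of "concat us @ v"]
proof
  assume "\<exists>us' r. concat us @ v = concat us' @ r \<and> set us' \<subseteq> discarded \<and> length r < k \<and>
    dstar step (buffer []) (concat us @ v) = buffer r"
  then obtain us' r where "concat us @ v @ [] = concat us' @ r" "set us' \<subseteq> discarded" "length r < k"
    by auto
  with assms block_length[OF assms(2)] show ?thesis
    using block_factorization_unique[of us us' v r "[]"] by auto
next
  assume "\<exists>us' v' z. concat us @ v = concat us' @ v' @ z \<and> set us' \<subseteq> discarded \<and> v' \<in> A0 \<union> A1 \<and>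
    dstar step (buffer []) (concat us' @ v') = block_output v' \<and>
    dstar step (buffer []) (concat us @ v) = block_output v'"
  then obtain us' v' z where "concat us' @ v' @ z = concat us @ v" "set us' \<subseteq> discarded"
    "v' \<in> A0 \<union> A1" "dstar step (buffer []) (concat us @ v) = block_output v'"
    by auto
  with assms block_length show ?thesis
    using block_factorization_unique[of us' us v' v z] by auto
qed

lemma run_not_final_before_block:
  assumes "set us \<subseteq> discarded" "v \<in> A0 \<union> A1" "concat us @ v = w @ z" "z \<noteq> []"
  shows "dstar step (buffer []) w \<notin> {0, 1}"
  using run_cases[of w]
proof
  assume "\<exists>us' r. w = concat us' @ r \<and> set us' \<subseteq> discarded \<and> length r < k \<and> dstar step (buffer []) w = buffer r"
  then obtain r where "dstar step (buffer []) w = buffer r"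
    by blast
  then show ?thesis
    using buffer_ge_2[of r] by auto
next
  assume "\<exists>us' v' z'. w = concat us' @ v' @ z' \<and> set us' \<subseteq> discarded \<and> v' \<in> A0 \<union> A1 \<and>
    dstar step (buffer []) (concat us' @ v') = block_output v' \<and> dstar step (buffer []) w = block_output v'"
  then obtain us' v' z' where "concat us' @ v' @ (z' @ z) = concat us @ v" "set us' \<subseteq> discarded" "v' \<in> A0 \<union> A1"
    using assms(3) by auto
  with assms block_length show ?thesis
    using block_factorization_unique[of us' us v' v "z' @ z"] by auto
qed

lemma aut_lang_eq_block_lang:
  assumes "c < 2"
  shows "aut_lang step (buffer []) {0} {1} {c} = block_lang discarded {v \<in> A0 \<union> A1. block_output v = c}"
proof (intro equalityI subsetI)
  fix x
  assume "x \<in> aut_lang step (buffer []) {0} {1} {c}"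
  then have accept: "dstar step (buffer []) x = c"
    and no_stop: "\<And>w z. x = w @ z \<Longrightarrow> z \<noteq> [] \<Longrightarrow> dstar step (buffer []) w \<notin> {0, 1}"
    unfolding aut_lang_def by auto
  from run_cases[of x] show "x \<in> block_lang discarded {v \<in> A0 \<union> A1. block_output v = c}"
  proof
    assume "\<exists>us r. x = concat us @ r \<and> set us \<subseteq> discarded \<and> length r < k \<and> dstar step (buffer []) x = buffer r"
    then obtain r where "dstar step (buffer []) x = buffer r"
      by blast
    with accept assms buffer_ge_2[of r] show ?thesis
      by simp
  next
    assume "\<exists>us v z. x = concat us @ v @ z \<and> set us \<subseteq> discarded \<and> v \<in> A0 \<union> A1 \<and>
      dstar step (buffer []) (concat us @ v) = block_output v \<and> dstar step (buffer []) x = block_output v"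
    then obtain us v z where x: "x = concat us @ v @ z" "set us \<subseteq> discarded" "v \<in> A0 \<union> A1"
      and stop: "dstar step (buffer []) (concat us @ v) = block_output v" "dstar step (buffer []) x = block_output v"
      by blast
    have "z = []"
      using no_stop[of "concat us @ v" z] x stop block_output_final[OF x(3)] by fastforce
    with x stop accept show ?thesis
      unfolding block_lang_def by auto
  qed
next
  fix x
  assume "x \<in> block_lang discarded {v \<in> A0 \<union> A1. block_output v = c}"
  then obtain us v where x: "x = concat us @ v" "set us \<subseteq> discarded" "v \<in> A0 \<union> A1" "block_output v = c"
    unfolding block_lang_def by blast
  have "dstar step (buffer []) x \<in> {c}"
    using run_stops_at_block[OF x(2,3)] x(1,4) by simp
  moreover have "dstar step (buffer []) w \<notin> {0} \<union> {1}" if "x = w @ z \<and> z \<noteq> []" for w z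
    using run_not_final_before_block[OF x(2,3), of w z] x(1) that by simp
  ultimately show "x \<in> aut_lang step (buffer []) {0} {1} {c}"
    unfolding aut_lang_def by blast
qed

end

lemma has_block_simulation_imp_automaton:
  assumes "has_block_simulation D f"
  shows "automaton_simulable D f"
proof -
  obtain k A0 A1 where A: "k \<ge> 1" "A0 \<subseteq> {w. length w = k}" "A1 \<subseteq> {w. length w = k}" "A0 \<inter> A1 = {}"
    and sim: "is_simulation D f (block_lang ({w. length w = k} - (A0 \<union> A1)) A0)
      (block_lang ({w. length w = k} - (A0 \<union> A1)) A1)"
    using assms unfolding has_block_simulation_def Let_def by blast
  interpret block_automaton k A0 A1
    using A by unfold_locales
  have "{v \<in> A0 \<union> A1. block_output v = 0} = A0" "{v \<in> A0 \<union> A1. block_output v = 1} = A1"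
    using A(4) buffer_ge_2 by (auto simp: block_output_def)
  then have "is_simulation D f (aut_lang step (buffer []) {0} {1} {0}) (aut_lang step (buffer []) {0} {1} {1})"
    using sim aut_lang_eq_block_lang[of 0] aut_lang_eq_block_lang[of 1] by (simp add: discarded_def)
  then show ?thesis
    unfolding automaton_simulable_def using is_automaton_states by blast
qed

section \<open>From automata to rational functions\<close>

text \<open>A discrete maximum principle: by \<open>y = M y\<close>, a positive maximum of \<open>y\<close> propagates along the
  positive entries of \<open>M\<close>, and it cannot be attained at a row with sum \<open>< 1\<close>.\<close>

lemma substochastic_fixpoint_nonpos:
  fixes I :: "'i set" and M :: "'i \<Rightarrow> 'i \<Rightarrow> real" and y :: "'i \<Rightarrow> real"
  assumes fin: "finite I"
    and nonneg: "\<And>i j. i \<in> I \<Longrightarrow> j \<in> I \<Longrightarrow> M i j \<ge> 0"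
    and rows: "\<And>i. i \<in> I \<Longrightarrow> (\<Sum>j\<in>I. M i j) \<le> 1"
    and leaky: "\<And>i. i \<in> I \<Longrightarrow> \<exists>j. (\<lambda>a b. a \<in> I \<and> b \<in> I \<and> M a b > 0)\<^sup>*\<^sup>* i j \<and> j \<in> I \<and> (\<Sum>l\<in>I. M j l) < 1"
    and fixpoint: "\<And>i. i \<in> I \<Longrightarrow> y i = (\<Sum>j\<in>I. M i j * y j)"
    and i: "i \<in> I"
  shows "y i \<le> 0"
proof (rule ccontr)
  assume "\<not> y i \<le> 0"
  define m where "m = Max (y ` I)"
  have le_m: "y j \<le> m" if "j \<in> I" for j
    unfolding m_def using fin that by auto
  have "m \<in> y ` I"
    unfolding m_def using fin i by (intro Max_in) auto
  then obtain i0 where i0: "i0 \<in> I" "y i0 = m"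
    by auto
  have "m > 0"
    using le_m[OF i] \<open>\<not> y i \<le> 0\<close> by simp
  have at_max: "(\<Sum>l\<in>I. M a l) = 1 \<and> (\<forall>b\<in>I. M a b > 0 \<longrightarrow> y b = m)" if a: "a \<in> I" "y a = m" for a
  proof -
    have "m = (\<Sum>j\<in>I. M a j * y j)"
      using fixpoint[OF a(1)] a(2) by simp
    moreover have "(\<Sum>j\<in>I. M a j * y j) \<le> (\<Sum>j\<in>I. M a j * m)"
      by (intro sum_mono mult_left_mono le_m nonneg a(1))
    moreover have "(\<Sum>j\<in>I. M a j * m) = m * (\<Sum>j\<in>I. M a j)"
      by (simp add: sum_distrib_left mult.commute)
    moreover have "m * (\<Sum>j\<in>I. M a j) \<le> m"
      using rows[OF a(1)] \<open>m > 0\<close> by (simp add: mult_le_cancel_left1)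
    ultimately have "(\<Sum>j\<in>I. M a j * y j) = (\<Sum>j\<in>I. M a j * m)" and "m * (\<Sum>j\<in>I. M a j) = m"
      by linarith+
    then have "(\<Sum>j\<in>I. M a j) = 1" and "(\<Sum>j\<in>I. M a j * (m - y j)) = 0"
      using \<open>m > 0\<close> by (simp_all add: algebra_simps sum_subtractf)
    moreover have "\<forall>j\<in>I. M a j * (m - y j) = 0"
      using calculation(2) fin nonneg a le_m by (subst (asm) sum_nonneg_eq_0_iff) auto
    ultimately show ?thesis
      by auto
  qed
  obtain j where j: "(\<lambda>a b. a \<in> I \<and> b \<in> I \<and> M a b > 0)\<^sup>*\<^sup>* i0 j" "j \<in> I" "(\<Sum>l\<in>I. M j l) < 1"
    using leaky[OF i0(1)] by blast
  from j(1) have "y j = m"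
    by (induction rule: rtranclp_induct) (use i0 at_max in auto)
  with at_max[OF j(2)] j(3) show False
    by simp
qed

lemma substochastic_fixpoint_zero:
  fixes I :: "'i set" and M :: "'i \<Rightarrow> 'i \<Rightarrow> real" and y :: "'i \<Rightarrow> real"
  assumes "finite I"
    and "\<And>i j. i \<in> I \<Longrightarrow> j \<in> I \<Longrightarrow> M i j \<ge> 0"
    and "\<And>i. i \<in> I \<Longrightarrow> (\<Sum>j\<in>I. M i j) \<le> 1"
    and "\<And>i. i \<in> I \<Longrightarrow> \<exists>j. (\<lambda>a b. a \<in> I \<and> b \<in> I \<and> M a b > 0)\<^sup>*\<^sup>* i j \<and> j \<in> I \<and> (\<Sum>l\<in>I. M j l) < 1"
    and fixpoint: "\<And>i. i \<in> I \<Longrightarrow> y i = (\<Sum>j\<in>I. M i j * y j)"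
    and "i \<in> I"
  shows "y i = 0"
proof -
  have neg_fixpoint: "- y i = (\<Sum>j\<in>I. M i j * - y j)" if "i \<in> I" for i
    using fixpoint[OF that] by (simp add: sum_negf)
  have "- y i \<le> 0"
    using substochastic_fixpoint_nonpos[where y = "\<lambda>i. - y i", OF assms(1-4) neg_fixpoint assms(6)] .
  moreover have "y i \<le> 0"
    by (rule substochastic_fixpoint_nonpos[OF assms(1-4) fixpoint assms(6)])
  ultimately show ?thesis
    by simp
qed

locale automaton =
  fixes S :: "nat set" and s0 :: nat and \<delta> :: "nat \<Rightarrow> bool \<Rightarrow> nat" and S0 S1 :: "nat set"
  assumes automaton: "is_automaton S s0 \<delta> S0 S1"
begin

abbreviation final :: "nat set" where
  "final \<equiv> S0 \<union> S1"

abbreviation lang_from :: "nat \<Rightarrow> nat set \<Rightarrow> bool list set" where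
  "lang_from s X \<equiv> aut_lang \<delta> s S0 S1 X"

lemma finite_states: "finite S" and start_state: "s0 \<in> S" and step_closed: "s \<in> S \<Longrightarrow> \<delta> s b \<in> S"
  and S0_S1_disjoint: "S0 \<inter> S1 = {}"
  and final_absorbing: "s \<in> final \<Longrightarrow> \<delta> s b = s"
  using automaton unfolding is_automaton_def by blast+

lemma dstar_final: "s \<in> final \<Longrightarrow> dstar \<delta> s w = s"
  by (induction w) (auto simp: final_absorbing)

lemma dstar_closed: "s \<in> S \<Longrightarrow> dstar \<delta> s w \<in> S"
  by (induction w arbitrary: s) (auto simp: step_closed)

lemma prefix_free_lang_from: "X \<subseteq> final \<Longrightarrow> prefix_free (lang_from s X)"
  unfolding prefix_free_def aut_lang_def by blast

lemma prefix_free_lang_from_Un: "prefix_free (lang_from s S0 \<union> lang_from s S1)"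
  unfolding prefix_free_def aut_lang_def by blast

lemma lang_from_final:
  assumes "s \<in> final" "X \<subseteq> final"
  shows "lang_from s X = (if s \<in> X then {[]} else {})"
proof -
  have "w = []" if w: "w \<in> lang_from s X" for w
  proof (rule ccontr)
    assume "w \<noteq> []"
    moreover have "w = [] @ w"
      by simp
    ultimately have "dstar \<delta> s [] \<notin> final"
      using w unfolding aut_lang_def by blast
    with assms(1) show False
      by simp
  qed
  moreover have "[] \<in> lang_from s X \<longleftrightarrow> s \<in> X"
    unfolding aut_lang_def by simp
  ultimately show ?thesis
    by auto
qed

lemma lang_from_Cons:
  assumes "s \<notin> final" "X \<subseteq> final"
  shows "lang_from s X = Cons True ` lang_from (\<delta> s True) X \<union> Cons False ` lang_from (\<delta> s False) X"
proof (intro equalityI subsetI)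
  fix w
  assume w: "w \<in> lang_from s X"
  with assms obtain b w' where bw: "w = b # w'"
    unfolding aut_lang_def by (cases w) auto
  have "w' \<in> lang_from (\<delta> s b) X"
    unfolding aut_lang_def
  proof (intro CollectI conjI allI impI)
    show "dstar \<delta> (\<delta> s b) w' \<in> X"
      using w bw unfolding aut_lang_def by auto
    fix v z
    assume "w' = v @ z \<and> z \<noteq> []"
    with bw have "w = (b # v) @ z" "z \<noteq> []"
      by auto
    with w have "dstar \<delta> s (b # v) \<notin> final"
      unfolding aut_lang_def by blast
    then show "dstar \<delta> (\<delta> s b) v \<notin> final"
      by simp
  qed
  with bw show "w \<in> Cons True ` lang_from (\<delta> s True) X \<union> Cons False ` lang_from (\<delta> s False) X"
    by (cases b) auto
next
  fix w
  assume "w \<in> Cons True ` lang_from (\<delta> s True) X \<union> Cons False ` lang_from (\<delta> s False) X"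
  then obtain b w' where bw: "w = b # w'" "w' \<in> lang_from (\<delta> s b) X"
    by blast
  show "w \<in> lang_from s X"
    unfolding aut_lang_def
  proof (intro CollectI conjI allI impI)
    show "dstar \<delta> s w \<in> X"
      using bw unfolding aut_lang_def by auto
    fix v z
    assume vz: "w = v @ z \<and> z \<noteq> []"
    show "dstar \<delta> s v \<notin> final"
    proof (cases v)
      case (Cons c v')
      with vz bw have "dstar \<delta> (\<delta> s b) v' \<notin> final" "c = b"
        unfolding aut_lang_def by auto
      with Cons show ?thesis
        by simp
    qed (use assms in simp)
  qed
qed

definition accept_prob :: "real \<Rightarrow> nat \<Rightarrow> real" where
  "accept_prob p s = infsum (Pw p) (lang_from s S1)"

lemma accept_prob_has_sum:
  assumes "0 \<le> p" "p \<le> 1"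
  shows "(Pw p has_sum accept_prob p s) (lang_from s S1)"
proof -
  obtain v where "(Pw p has_sum v) (lang_from s S1)"
    using has_sum_Pw_prefix_free[OF assms prefix_free_lang_from[of S1 s]] by auto
  then show ?thesis
    unfolding accept_prob_def by (simp add: has_sum_iff)
qed

lemma accept_prob_step:
  assumes "0 \<le> p" "p \<le> 1" "s \<notin> final"
  shows "accept_prob p s = p * accept_prob p (\<delta> s True) + (1 - p) * accept_prob p (\<delta> s False)"
proof -
  have "(Pw p has_sum (p * accept_prob p (\<delta> s True) + (1 - p) * accept_prob p (\<delta> s False)))
      (Cons True ` lang_from (\<delta> s True) S1 \<union> Cons False ` lang_from (\<delta> s False) S1)"
    using has_sum_Pw_Cons_image[OF accept_prob_has_sum[OF assms(1,2)], of True]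
      has_sum_Pw_Cons_image[OF accept_prob_has_sum[OF assms(1,2)], of False]
    by (intro has_sum_Un_disjoint) auto
  then have "(Pw p has_sum (p * accept_prob p (\<delta> s True) + (1 - p) * accept_prob p (\<delta> s False)))
      (lang_from s S1)"
    using lang_from_Cons[OF assms(3), of S1] by simp
  then show ?thesis
    using accept_prob_has_sum[OF assms(1,2), of s] has_sum_unique by blast
qed

lemma accept_prob_final: "s \<in> final \<Longrightarrow> accept_prob p s = (if s \<in> S1 then 1 else 0)"
  unfolding accept_prob_def by (simp add: lang_from_final)

definition live :: "nat set" where
  "live = {dstar \<delta> s0 u | u. True} - final"

lemma live_subset: "live \<subseteq> S"
  unfolding live_def using dstar_closed start_state by auto

lemma finite_live: "finite live"
  using finite_subset[OF live_subset finite_states] .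

lemma live_not_final: "s \<in> live \<Longrightarrow> s \<notin> final"
  unfolding live_def by auto

lemma live_step: "s \<in> live \<Longrightarrow> \<delta> s b \<in> live \<or> \<delta> s b \<in> final"
  unfolding live_def by (auto simp flip: dstar_snoc)

text \<open>A word leading to a trapped live state could be added to the prefix-free halting language,
  pushing its probability beyond one.\<close>

lemma live_reaches_final:
  assumes p: "0 < p" "p < 1" and halts: "(Pw p has_sum 1) (lang_from s0 S0 \<union> lang_from s0 S1)"
    and s: "s \<in> live"
  shows "\<exists>w. dstar \<delta> s w \<in> final"
proof (rule ccontr)
  assume trapped: "\<not> (\<exists>w. dstar \<delta> s w \<in> final)"
  obtain u where u: "s = dstar \<delta> s0 u"
    using s unfolding live_def by auto
  define L where "L = lang_from s0 S0 \<union> lang_from s0 S1"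
  have L_final: "dstar \<delta> s0 w \<in> final" if "w \<in> L" for w
    using that unfolding L_def aut_lang_def by auto
  have "u \<notin> L"
    using L_final live_not_final[OF s] u by auto
  have "prefix_free (insert u L)"
    unfolding prefix_free_def
  proof (intro ballI allI impI)
    fix a b z
    assume a: "a \<in> insert u L" and b: "b \<in> insert u L" and "b = a @ z"
    consider "a = u" "b = u" | "a = u" "b \<in> L" | "a \<in> L" "b = u" | "a \<in> L" "b \<in> L"
      using a b by blast
    then show "z = []"
    proof cases
      case 2
      then show ?thesis
        using L_final[of b] trapped \<open>b = a @ z\<close> u by (simp add: dstar_append)
    next
      case 3
      have "dstar \<delta> s0 b = dstar \<delta> (dstar \<delta> s0 a) z"
        using \<open>b = a @ z\<close> by (simp add: dstar_append)
      also have "\<dots> = dstar \<delta> s0 a"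
        using L_final[OF 3(1)] by (rule dstar_final)
      finally have "s \<in> final"
        using L_final[OF 3(1)] 3(2) u by simp
      with live_not_final[OF s] show ?thesis
        by blast
    next
      case 4
      then show ?thesis
        using prefix_free_lang_from_Un \<open>b = a @ z\<close> unfolding L_def prefix_free_def by blast
    qed (use \<open>b = a @ z\<close> in simp)
  qed
  then obtain v where "(Pw p has_sum v) (insert u L)" "v \<le> 1"
    using has_sum_Pw_prefix_free[of p] p by auto
  moreover have "(Pw p has_sum (Pw p u + 1)) (insert u L)"
    using has_sum_insert[OF \<open>u \<notin> L\<close>] halts unfolding L_def by blast
  ultimately show False
    using has_sum_unique Pw_pos[OF p, of u] by fastforce
qed

end

lemma sum_select_nth:
  assumes "distinct xs"
  shows "(\<Sum>j<length xs. if t = xs ! j then G (xs ! j) else 0) = (if t \<in> set xs then G t else (0::'a::comm_monoid_add))"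
proof (cases "t \<in> set xs")
  case True
  then obtain j0 where j0: "j0 < length xs" "xs ! j0 = t"
    by (auto simp: in_set_conv_nth)
  have "(\<Sum>j<length xs. if t = xs ! j then G (xs ! j) else 0) = (\<Sum>j<length xs. if j = j0 then G t else 0)"
    using j0 assms by (intro sum.cong refl) (auto simp: nth_eq_iff_index_eq)
  with True j0 show ?thesis
    by simp
next
  case False
  then have "t \<noteq> xs ! j" if "j < length xs" for j
    using that nth_mem by blast
  with False show ?thesis
    by simp
qed

lemma map_mat_replace_col:
  "dim_vec b = dim_row A \<Longrightarrow> map_mat h (replace_col A b k) = replace_col (map_mat h A) (map_vec h b) k"
  unfolding replace_col_def by (rule eq_matI) auto

lemma comm_ring_hom_rpoly: "comm_ring_hom (\<lambda>q. rpoly q x)"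
  by unfold_locales (simp_all add: hom_distribs)

context automaton
begin

definition live_list :: "nat list" where
  "live_list = sorted_list_of_set live"

abbreviation n_live :: nat where
  "n_live \<equiv> length live_list"

lemma distinct_live_list: "distinct live_list" and set_live_list: "set live_list = live"
  unfolding live_list_def using finite_live by auto

lemma live_list_nth: "i < n_live \<Longrightarrow> live_list ! i \<in> live"
  using set_live_list nth_mem by blast

definition trans_prob :: "real \<Rightarrow> nat \<Rightarrow> nat \<Rightarrow> real" where
  "trans_prob p i j = p * (if \<delta> (live_list ! i) True = live_list ! j then 1 else 0) +
     (1 - p) * (if \<delta> (live_list ! i) False = live_list ! j then 1 else 0)"

definition accept_step_prob :: "real \<Rightarrow> nat \<Rightarrow> real" where
  "accept_step_prob p i = p * (if \<delta> (live_list ! i) True \<in> S1 then 1 else 0) +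
     (1 - p) * (if \<delta> (live_list ! i) False \<in> S1 then 1 else 0)"

lemma sum_trans_prob:
  "(\<Sum>j<n_live. trans_prob p i j * G (live_list ! j)) =
     p * (if \<delta> (live_list ! i) True \<in> live then G (\<delta> (live_list ! i) True) else 0) +
     (1 - p) * (if \<delta> (live_list ! i) False \<in> live then G (\<delta> (live_list ! i) False) else 0)"
proof -
  have "trans_prob p i j * G (live_list ! j) =
      p * (if \<delta> (live_list ! i) True = live_list ! j then G (live_list ! j) else 0) +
      (1 - p) * (if \<delta> (live_list ! i) False = live_list ! j then G (live_list ! j) else 0)" for j
    unfolding trans_prob_def by (auto simp: algebra_simps)
  then have "(\<Sum>j<n_live. trans_prob p i j * G (live_list ! j)) =
      p * (\<Sum>j<n_live. if \<delta> (live_list ! i) True = live_list ! j then G (live_list ! j) else 0) +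
      (1 - p) * (\<Sum>j<n_live. if \<delta> (live_list ! i) False = live_list ! j then G (live_list ! j) else 0)"
    by (simp add: sum.distrib sum_distrib_left)
  then show ?thesis
    unfolding sum_select_nth[OF distinct_live_list] set_live_list .
qed

lemma trans_prob_nonneg: "0 \<le> p \<Longrightarrow> p \<le> 1 \<Longrightarrow> trans_prob p i j \<ge> 0"
  unfolding trans_prob_def by simp

lemma sum_trans_prob_le: "0 \<le> p \<Longrightarrow> p \<le> 1 \<Longrightarrow> (\<Sum>j<n_live. trans_prob p i j) \<le> 1"
  using sum_trans_prob[of p i "\<lambda>_. 1"] by auto

text \<open>In \<open>I_minus_trans_poly\<close> the polynomials \<open>[:0, 1:]\<close> and \<open>[:1, -1:]\<close> stand for \<open>p\<close>
  and \<open>1 - p\<close>, so that evaluation at \<open>p\<close> gives \<open>I_minus_trans p\<close>.\<close>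

definition I_minus_trans :: "real \<Rightarrow> real mat" where
  "I_minus_trans p = mat n_live n_live (\<lambda>(i, j). (if i = j then 1 else 0) - trans_prob p i j)"

definition I_minus_trans_poly :: "rat poly mat" where
  "I_minus_trans_poly = mat n_live n_live (\<lambda>(i, j). (if i = j then 1 else 0) -
     ((if \<delta> (live_list ! i) True = live_list ! j then [:0, 1:] else 0) +
      (if \<delta> (live_list ! i) False = live_list ! j then [:1, -1:] else 0)))"

definition accept_step_poly :: "rat poly vec" where
  "accept_step_poly = vec n_live (\<lambda>i. (if \<delta> (live_list ! i) True \<in> S1 then [:0, 1:] else 0) +
     (if \<delta> (live_list ! i) False \<in> S1 then [:1, -1:] else 0))"

lemma map_mat_I_minus_trans_poly: "map_mat (\<lambda>q. rpoly q p) I_minus_trans_poly = I_minus_trans p"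
  unfolding I_minus_trans_poly_def I_minus_trans_def trans_prob_def
  by (rule eq_matI) (auto simp: hom_distribs)

lemma map_vec_accept_step_poly: "map_vec (\<lambda>q. rpoly q p) accept_step_poly = vec n_live (accept_step_prob p)"
  unfolding accept_step_poly_def accept_step_prob_def
  by (rule eq_vecI) (auto simp: hom_distribs)

lemma I_minus_trans_carrier: "I_minus_trans p \<in> carrier_mat n_live n_live"
  unfolding I_minus_trans_def by simp

lemma I_minus_trans_mult_vec:
  assumes "i < n_live" "dim_vec v = n_live"
  shows "(I_minus_trans p *\<^sub>v v) $ i = v $ i - (\<Sum>j<n_live. trans_prob p i j * v $ j)"
proof -
  have "(I_minus_trans p *\<^sub>v v) $ i = (\<Sum>j\<in>{0..<n_live}. ((if i = j then 1 else 0) - trans_prob p i j) * v $ j)"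
    using assms unfolding I_minus_trans_def by (simp add: scalar_prod_def)
  also have "\<dots> = (\<Sum>j<n_live. (if i = j then v $ j else 0)) - (\<Sum>j<n_live. trans_prob p i j * v $ j)"
    by (simp add: atLeast0LessThan left_diff_distrib sum_subtractf if_distrib[of "\<lambda>c. c * _"] cong: if_cong)
  also have "(\<Sum>j<n_live. (if i = j then v $ j else 0)) = v $ i"
    using assms(1) by simp
  finally show ?thesis .
qed

lemma live_leaky:
  assumes p: "0 < p" "p < 1" and reach: "\<forall>s\<in>live. \<exists>w. dstar \<delta> s w \<in> final" and i: "i < n_live"
  shows "\<exists>j. (\<lambda>a b. a \<in> {..<n_live} \<and> b \<in> {..<n_live} \<and> trans_prob p a b > 0)\<^sup>*\<^sup>* i j \<and>
    j \<in> {..<n_live} \<and> (\<Sum>l\<in>{..<n_live}. trans_prob p j l) < 1"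
proof -
  let ?edge = "\<lambda>a b. a \<in> {..<n_live} \<and> b \<in> {..<n_live} \<and> trans_prob p a b > 0"
  obtain w where "dstar \<delta> (live_list ! i) w \<in> final"
    using reach live_list_nth[OF i] by blast
  with i show ?thesis
  proof (induction w arbitrary: i)
    case Nil
    then show ?case
      using live_list_nth live_not_final by auto
  next
    case (Cons b w)
    show ?case
    proof (cases "\<delta> (live_list ! i) b \<in> live")
      case False
      have "(\<Sum>l<n_live. trans_prob p i l) < 1"
        using sum_trans_prob[of p i "\<lambda>_. 1"] False p by (cases b) auto
      with Cons.prems show ?thesis
        by blast
    next
      case True
      then obtain i' where i': "i' < n_live" "live_list ! i' = \<delta> (live_list ! i) b"
        using set_live_list by (metis in_set_conv_nth)
      have "trans_prob p i i' > 0"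
        unfolding trans_prob_def using i' p by (cases b) (auto simp: add_pos_nonneg add_nonneg_pos)
      with Cons.prems(1) i'(1) have "?edge i i'"
        by simp
      have "dstar \<delta> (live_list ! i') w \<in> final"
        using Cons.prems(2) i'(2) by simp
      then obtain j where "?edge\<^sup>*\<^sup>* i' j" "j \<in> {..<n_live}" "(\<Sum>l\<in>{..<n_live}. trans_prob p j l) < 1"
        using Cons.IH[OF i'(1)] by blast
      then show ?thesis
        using converse_rtranclp_into_rtranclp[where r = ?edge, OF \<open>?edge i i'\<close>] by blast
    qed
  qed
qed

lemma det_I_minus_trans_nonzero:
  assumes p: "0 < p" "p < 1" and reach: "\<forall>s\<in>live. \<exists>w. dstar \<delta> s w \<in> final"
  shows "det (I_minus_trans p) \<noteq> 0"
proof
  assume "det (I_minus_trans p) = 0"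
  then obtain v where v: "v \<in> carrier_vec n_live" "v \<noteq> 0\<^sub>v n_live" "I_minus_trans p *\<^sub>v v = 0\<^sub>v n_live"
    using det_0_iff_vec_prod_zero_field[OF I_minus_trans_carrier] by blast
  have fixpoint: "v $ i = (\<Sum>j\<in>{..<n_live}. trans_prob p i j * v $ j)" if "i \<in> {..<n_live}" for i
    using arg_cong[OF v(3), of "\<lambda>u. u $ i"] I_minus_trans_mult_vec[of i v p] v(1) that by simp
  have "v $ i = 0" if "i < n_live" for i
  proof (rule substochastic_fixpoint_zero[where M = "trans_prob p" and I = "{..<n_live}", OF _ _ _ _ fixpoint])
    show "\<exists>j. (\<lambda>a b. a \<in> {..<n_live} \<and> b \<in> {..<n_live} \<and> trans_prob p a b > 0)\<^sup>*\<^sup>* i j \<and>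
        j \<in> {..<n_live} \<and> (\<Sum>l\<in>{..<n_live}. trans_prob p j l) < 1" if "i \<in> {..<n_live}" for i
      using live_leaky[OF p reach] that by blast
  qed (use p that trans_prob_nonneg sum_trans_prob_le in auto)
  then have "v = 0\<^sub>v n_live"
    using v(1) by (intro eq_vecI) auto
  with v(2) show False
    by contradiction
qed

lemma I_minus_trans_accept_prob:
  assumes p: "0 \<le> p" "p \<le> 1"
  shows "I_minus_trans p *\<^sub>v vec n_live (\<lambda>i. accept_prob p (live_list ! i)) = vec n_live (accept_step_prob p)"
proof (rule eq_vecI)
  fix i
  assume "i < dim_vec (vec n_live (accept_step_prob p))"
  then have i: "i < n_live"
    by simp
  have split: "accept_prob p t - (if t \<in> live then accept_prob p t else 0) = (if t \<in> S1 then 1 else 0)"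
    if "t \<in> live \<or> t \<in> final" for t
    using that live_not_final accept_prob_final[of t p] S0_S1_disjoint by auto
  have "(I_minus_trans p *\<^sub>v vec n_live (\<lambda>i. accept_prob p (live_list ! i))) $ i =
      accept_prob p (live_list ! i) - (\<Sum>j<n_live. trans_prob p i j * accept_prob p (live_list ! j))"
    using I_minus_trans_mult_vec[of i _ p] i by simp
  also have "\<dots> = p * (accept_prob p (\<delta> (live_list ! i) True) -
        (if \<delta> (live_list ! i) True \<in> live then accept_prob p (\<delta> (live_list ! i) True) else 0)) +
      (1 - p) * (accept_prob p (\<delta> (live_list ! i) False) -
        (if \<delta> (live_list ! i) False \<in> live then accept_prob p (\<delta> (live_list ! i) False) else 0))"
    unfolding sum_trans_prob accept_prob_step[OF p live_not_final[OF live_list_nth[OF i]]]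
    by (simp add: algebra_simps)
  also have "\<dots> = accept_step_prob p i"
  proof -
    have "accept_prob p (\<delta> (live_list ! i) b) -
        (if \<delta> (live_list ! i) b \<in> live then accept_prob p (\<delta> (live_list ! i) b) else 0) =
        (if \<delta> (live_list ! i) b \<in> S1 then 1 else 0)" for b
      using split live_step[OF live_list_nth[OF i]] by blast
    then show ?thesis
      unfolding accept_step_prob_def by simp
  qed
  finally show "(I_minus_trans p *\<^sub>v vec n_live (\<lambda>i. accept_prob p (live_list ! i))) $ i =
      vec n_live (accept_step_prob p) $ i"
    using i by simp
qed (simp add: I_minus_trans_def)

text \<open>Cramer's rule for \<open>(I - M(p)) x = b(p)\<close>, whose matrix and right-hand side are
  evaluations of polynomial ones.\<close>

lemma accept_prob_rational:
  assumes start: "s0 \<in> live" and reach: "\<forall>s\<in>live. \<exists>w. dstar \<delta> s w \<in> final"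
  obtains P Q where "\<And>x. 0 < x \<Longrightarrow> x < 1 \<Longrightarrow> accept_prob x s0 = rpoly P x / rpoly Q x \<and> rpoly Q x \<noteq> 0"
proof -
  obtain k where k: "k < n_live" "live_list ! k = s0"
    using start set_live_list by (metis in_set_conv_nth)
  define Q where "Q = det I_minus_trans_poly"
  define P where "P = det (replace_col I_minus_trans_poly accept_step_poly k)"
  have Q: "rpoly Q x = det (I_minus_trans x)" for x
    unfolding Q_def using comm_ring_hom.hom_det[OF comm_ring_hom_rpoly, of x I_minus_trans_poly]
    by (simp add: map_mat_I_minus_trans_poly)
  have P: "rpoly P x = det (replace_col (I_minus_trans x) (vec n_live (accept_step_prob x)) k)" for x
  proof -
    have "dim_vec accept_step_poly = dim_row I_minus_trans_poly"
      unfolding accept_step_poly_def I_minus_trans_poly_def by simp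
    then have "map_mat (\<lambda>q. rpoly q x) (replace_col I_minus_trans_poly accept_step_poly k) =
        replace_col (I_minus_trans x) (vec n_live (accept_step_prob x)) k"
      by (simp add: map_mat_replace_col map_mat_I_minus_trans_poly map_vec_accept_step_poly)
    then show ?thesis
      unfolding P_def using comm_ring_hom.hom_det[OF comm_ring_hom_rpoly, of x] by metis
  qed
  show ?thesis
  proof (rule that)
    fix x :: real
    assume x: "0 < x" "x < 1"
    have "rpoly P x = accept_prob x s0 * rpoly Q x"
      using cramer_lemma_mat[OF I_minus_trans_carrier[of x], of "vec n_live (\<lambda>i. accept_prob x (live_list ! i))" k]
        I_minus_trans_accept_prob[of x] x k unfolding P Q by simp
    moreover have "rpoly Q x \<noteq> 0"
      unfolding Q using det_I_minus_trans_nonzero[OF x reach] .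
    ultimately show "accept_prob x s0 = rpoly P x / rpoly Q x \<and> rpoly Q x \<noteq> 0"
      by simp
  qed
qed


lemma accept_prob_strictly_between:
  assumes nonempty: "lang_from s0 S0 \<noteq> {}" "lang_from s0 S1 \<noteq> {}" and x: "0 < x" "x < 1"
  shows "0 < accept_prob x s0 \<and> accept_prob x s0 < 1"
proof -
  obtain w0 w1 where w: "w0 \<in> lang_from s0 S0" "w1 \<in> lang_from s0 S1"
    using nonempty by blast
  obtain r where r: "(Pw x has_sum r) (lang_from s0 S0)"
    using has_sum_Pw_prefix_free[of x "lang_from s0 S0"] prefix_free_lang_from[of S0 s0] x by auto
  have accept: "(Pw x has_sum accept_prob x s0) (lang_from s0 S1)"
    using accept_prob_has_sum x by simp
  have "Pw x w0 \<le> r" "Pw x w1 \<le> accept_prob x s0"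
    using finite_sum_le_has_sum[OF r, of "{w0}"] finite_sum_le_has_sum[OF accept, of "{w1}"] w Pw_nonneg x
    by auto
  moreover obtain v where "(Pw x has_sum v) (lang_from s0 S0 \<union> lang_from s0 S1)" "v \<le> 1"
    using has_sum_Pw_prefix_free[OF _ _ prefix_free_lang_from_Un[of s0], of x] x by auto
  moreover have "lang_from s0 S0 \<inter> lang_from s0 S1 = {}"
    using S0_S1_disjoint unfolding aut_lang_def by auto
  then have "(Pw x has_sum (r + accept_prob x s0)) (lang_from s0 S0 \<union> lang_from s0 S1)"
    by (rule has_sum_Un_disjoint[OF r accept])
  ultimately show ?thesis
    using has_sum_unique Pw_pos[OF x, of w0] Pw_pos[OF x, of w1] by fastforce
qed

lemma rational_simulable_of_simulation:
  assumes sim: "is_simulation D f (lang_from s0 S0) (lang_from s0 S1)"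
    and D: "D \<noteq> {}" "D \<subseteq> {0<..<1}" and f: "\<forall>p\<in>D. 0 < f p \<and> f p < 1"
  shows "rational_simulable D f"
proof -
  obtain p0 where "p0 \<in> D"
    using D by blast
  with D f have p0: "0 < p0" "p0 < 1" and f_p0: "0 < f p0" "f p0 < 1"
    by auto
  have halts: "(Pw p0 has_sum 1) (lang_from s0 S0 \<union> lang_from s0 S1)"
    and accepts: "(Pw p0 has_sum f p0) (lang_from s0 S1)"
    using sim \<open>p0 \<in> D\<close> unfolding is_simulation_def by auto
  have L1: "lang_from s0 S1 \<noteq> {}"
    using accepts f_p0 has_sum_unique[OF _ has_sum_empty] by fastforce
  have L0: "lang_from s0 S0 \<noteq> {}"
    using halts accepts f_p0 has_sum_unique by fastforce
  have "s0 \<notin> final"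
  proof
    assume "s0 \<in> final"
    then have "lang_from s0 S0 = {} \<or> lang_from s0 S1 = {}"
      using S0_S1_disjoint lang_from_final[of s0 S0] lang_from_final[of s0 S1] by (cases "s0 \<in> S0") auto
    with L0 L1 show False
      by blast
  qed
  then have "s0 \<in> live"
    unfolding live_def by (auto intro: exI[of _ "[]"])
  moreover have "\<forall>s\<in>live. \<exists>w. dstar \<delta> s w \<in> final"
    using live_reaches_final[OF p0 halts] by blast
  ultimately obtain P Q where PQ: "\<And>x. 0 < x \<Longrightarrow> x < 1 \<Longrightarrow> accept_prob x s0 = rpoly P x / rpoly Q x \<and> rpoly Q x \<noteq> 0"
    by (rule accept_prob_rational) (rule that)
  have f_accept: "f p = accept_prob p s0" if p: "p \<in> D" for p
  proof -
    have "(Pw p has_sum f p) (lang_from s0 S1)"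
      using sim p unfolding is_simulation_def by blast
    moreover have "(Pw p has_sum accept_prob p s0) (lang_from s0 S1)"
      using p D by (intro accept_prob_has_sum) auto
    ultimately show ?thesis
      by (rule has_sum_unique)
  qed
  have "\<forall>x. 0 < x \<and> x < 1 \<longrightarrow> rpoly Q x \<noteq> 0 \<and> 0 < rpoly P x / rpoly Q x \<and> rpoly P x / rpoly Q x < 1"
    using PQ accept_prob_strictly_between[OF L0 L1] by auto
  moreover have "\<forall>p\<in>D. f p = rpoly P p / rpoly Q p"
  proof
    fix p
    assume "p \<in> D"
    with D have "0 < p" "p < 1"
      by auto
    with PQ f_accept[OF \<open>p \<in> D\<close>] show "f p = rpoly P p / rpoly Q p"
      by simp
  qed
  ultimately show ?thesis
    unfolding rational_simulable_def by blast
qed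

end

theorem theorem2p2:
  fixes D :: "real set" and f :: "real \<Rightarrow> real"
  assumes "D \<noteq> {}" and "D \<subseteq> {0<..<1}"
    and "\<forall>p\<in>D. 0 < f p \<and> f p < 1"
  shows "(has_block_simulation D f \<longleftrightarrow> automaton_simulable D f) \<and>
         (automaton_simulable D f \<longleftrightarrow> rational_simulable D f)"
proof -
  have "rational_simulable D f" if automaton: "automaton_simulable D f"
  proof -
    obtain S s0 \<delta> S0 S1 where "is_automaton S s0 \<delta> S0 S1"
      and sim: "is_simulation D f (aut_lang \<delta> s0 S0 S1 S0) (aut_lang \<delta> s0 S0 S1 S1)"
      using automaton unfolding automaton_simulable_def by blast
    then interpret automaton S s0 \<delta> S0 S1
      by unfold_locales
    show ?thesis
      using rational_simulable_of_simulation[OF sim assms] .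
  qed
  then show ?thesis
    using has_block_simulation_imp_automaton rational_simulable_imp_block[OF assms(2)] by blast
qed

end
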